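(* Let $G=(V,\mathcal E,w)$ be an undirected, connected, weighted graph on $n$ nodes. Let: - $E\in\mathbb R^{n\times|\mathcal E|}$ be its signed incidence matrix (arbitrary orientation); - $W=\mathrm{diag}(w(e))$; - $L=EWE^T$, with largest eigenvalue $\lambda_n$. Let $\tau\ge0$ with $\tau\lambda_n<\pi/2$. Consider the consensus network with measurement noise on the links, $$\dot x(t)=-L\,x(t-\tau)-E\,\xi(t),\qquad y=M_nx,$$ where $(\xi_e)_{e\in\mathcal E}$ are mutually independent zero-mean Gaussian white noises with intensities $\sigma_e^2$. Then for every link $e=\{i,j\}\in\mathcal E$, $$\nu_e=\frac12\,r_e\Big(L\cos(\tau L)^{-1}\big(M_n-\sin(\tau L)\big)\Big).$$
   Context: Notation: - $M_n=I_n-\frac1n\mathbf1\mathbf1^T$. - $X^\dagger$ is the Moore–Penrose pseudo-inverse. - $\cos(X)$ and $\sin(X)$ are the matrix power-series functions; $\cos(\tau L)$ is invertible since $\tau\lambda_n<\pi/2$. - For a symmetric matrix $X$ and $e=\{i,j\}$, $r_e(X)=[X^\dagger]_{ii}+[X^\dagger]_{jj}-2[X^\dagger]_{ij}$. The performance is $$\rho_{ss}=\lim_{t\to\infty}\mathbb E[y^Ty]=\frac1{2\pi}\int\mathrm{Tr}[G(j\omega)^HG(j\omega)]d\omega,\qquad G(s)=M_n(sI+e^{-\tau s}L)^{-1}(-E)\,\mathrm{diag}(\sigma_e).$$ The link centrality is $\nu_e=\partial\rho_{ss}/\partial\sigma_e^2$. *)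

theory Defs
  imports "HOL-Analysis.Analysis"
begin

text \<open>Each edge e is the unordered pair {src e, tgt e}; the pair (src e, tgt e) is an
  arbitrary orientation.\<close>

definition wgraph :: "('e::finite \<Rightarrow> 'n::finite) \<Rightarrow> ('e \<Rightarrow> 'n) \<Rightarrow> ('e \<Rightarrow> real) \<Rightarrow> bool" where
  "wgraph src tgt w \<longleftrightarrow>
     (\<forall>e. src e \<noteq> tgt e) \<and>
     (\<forall>e f. {src e, tgt e} = {src f, tgt f} \<longrightarrow> e = f) \<and>
     (\<forall>e. w e > 0)"

definition adjacent :: "('e::finite \<Rightarrow> 'n::finite) \<Rightarrow> ('e \<Rightarrow> 'n) \<Rightarrow> 'n \<Rightarrow> 'n \<Rightarrow> bool" where
  "adjacent src tgt i j \<longleftrightarrow> (\<exists>e. {src e, tgt e} = {i, j})"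

definition connected_graph :: "('e::finite \<Rightarrow> 'n::finite) \<Rightarrow> ('e \<Rightarrow> 'n) \<Rightarrow> bool" where
  "connected_graph src tgt \<longleftrightarrow> (\<forall>i j. (adjacent src tgt)\<^sup>*\<^sup>* i j)"

definition incidence :: "('e::finite \<Rightarrow> 'n::finite) \<Rightarrow> ('e \<Rightarrow> 'n) \<Rightarrow> real^'e^'n" where
  "incidence src tgt = (\<chi> i e. if i = src e then 1 else if i = tgt e then -1 else 0)"

definition diagm :: "('a::zero ^'n) \<Rightarrow> 'a^'n^'n" where
  "diagm d = (\<chi> i j. if i = j then d $ j else 0)"

definition laplacian :: "('e::finite \<Rightarrow> 'n::finite) \<Rightarrow> ('e \<Rightarrow> 'n) \<Rightarrow> ('e \<Rightarrow> real) \<Rightarrow> real^'n^'n" where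
  "laplacian src tgt w =
     incidence src tgt ** diagm (\<chi> e. w e) ** transpose (incidence src tgt)"

definition is_eigenvalue :: "real^'n^'n \<Rightarrow> real \<Rightarrow> bool" where
  "is_eigenvalue A l \<longleftrightarrow> (\<exists>x. x \<noteq> 0 \<and> A *v x = l *\<^sub>R x)"

definition lambda_max :: "real^'n::finite^'n \<Rightarrow> real" where
  "lambda_max A = Max {l. is_eigenvalue A l}"

definition centering :: "real^'n::finite^'n" where
  "centering = (\<chi> i j. (if i = j then 1 else 0) - 1 / real CARD('n))"

definition mpow :: "'a::semiring_1^'n::finite^'n \<Rightarrow> nat \<Rightarrow> 'a^'n^'n" where
  "mpow X k = ((\<lambda>Y. X ** Y) ^^ k) (mat 1)"

definition mat_cos :: "real^'n::finite^'n \<Rightarrow> real^'n^'n" where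
  "mat_cos X = (\<Sum>k. ((-1) ^ k / fact (2 * k)) *\<^sub>R mpow X (2 * k))"

definition mat_sin :: "real^'n::finite^'n \<Rightarrow> real^'n^'n" where
  "mat_sin X = (\<Sum>k. ((-1) ^ k / fact (2 * k + 1)) *\<^sub>R mpow X (2 * k + 1))"

definition pinv :: "real^'m::finite^'n::finite \<Rightarrow> real^'n^'m" where
  "pinv A = (THE X. A ** X ** A = A \<and> X ** A ** X = X \<and>
                    transpose (A ** X) = A ** X \<and> transpose (X ** A) = X ** A)"

definition eff_res :: "real^'n::finite^'n \<Rightarrow> 'n \<Rightarrow> 'n \<Rightarrow> real" where
  "eff_res X i j = pinv X $ i $ i + pinv X $ j $ j - 2 * pinv X $ i $ j"

definition cmat :: "real^'m::finite^'n::finite \<Rightarrow> complex^'m^'n" where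
  "cmat A = map_matrix complex_of_real A"

definition cadj :: "complex^'m::finite^'n::finite \<Rightarrow> complex^'n^'m" where
  "cadj A = (\<chi> i j. cnj (A $ j $ i))"

text \<open>Transfer function G(s) = M_n (sI + e^{-tau s} L)^{-1} (-E) diag(sigma_e),
  with sigma_e = sqrt of the noise intensity v e = sigma_e^2.\<close>
definition transfer ::
  "('e::finite \<Rightarrow> 'n::finite) \<Rightarrow> ('e \<Rightarrow> 'n) \<Rightarrow> ('e \<Rightarrow> real) \<Rightarrow> real \<Rightarrow> ('e \<Rightarrow> real)
     \<Rightarrow> complex \<Rightarrow> complex^'e^'n" where
  "transfer src tgt w \<tau> v s =
     cmat centering **
     matrix_inv (\<chi> i j. (if i = j then s else 0)
                    + exp (- (complex_of_real \<tau> * s)) * complex_of_real (laplacian src tgt w $ i $ j))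
     ** cmat (- incidence src tgt) ** cmat (diagm (\<chi> e. sqrt (v e)))"

definition rho_ss ::
  "('e::finite \<Rightarrow> 'n::finite) \<Rightarrow> ('e \<Rightarrow> 'n) \<Rightarrow> ('e \<Rightarrow> real) \<Rightarrow> real \<Rightarrow> ('e \<Rightarrow> real) \<Rightarrow> real" where
  "rho_ss src tgt w \<tau> v =
     1 / (2 * pi) * integral UNIV (\<lambda>\<omega>::real.
        Re (trace (cadj (transfer src tgt w \<tau> v (\<i> * complex_of_real \<omega>))
                   ** transfer src tgt w \<tau> v (\<i> * complex_of_real \<omega>))))"

end

theory Submission
  imports Defs "HOL-Complex_Analysis.Complex_Analysis"
begin

(* An orthonormal eigenbasis u_k of L, with eigenvalues \<mu>_k, diagonalises every matrix in
   the problem. The integrand of rho_ss becomes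
     \<Sum>_e \<sigma>_e^2 \<Sum>_{\<mu>_k > 0} (u_k(i) - u_k(j))^2 / |j\<omega> + \<mu>_k e^{-j\<omega>\<tau>}|^2,
   so rho_ss is affine in each \<sigma>_e^2 and \<nu>_e is a coefficient of this expansion. The scalar
   integrals are computed by residues: with a(s) = s + m e^{-\<tau>s},
     1 / (a(s) a(-s)) = -s / ((s^2 + m^2) a(s)) + m e^{\<tau>s} / ((s^2 + m^2) a(-s)),
   where the first term is holomorphic to the right of the imaginary axis and the second to
   its left except for simple poles at \<plusminus>jm. Since \<tau>m < \<pi>/2, a has no zeros in a strip
   around the axis, and closing the contours gives
     \<integral> d\<omega> / |a(j\<omega>)|^2 = \<pi> cos(\<tau>m) / (m (1 - sin(\<tau>m))).
   The same spectral calculus shows that L cos(\<tau>L)^-1 (M_n - sin(\<tau>L)) has eigenvalue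
   \<mu> (1 - sin(\<tau>\<mu>)) / cos(\<tau>\<mu>) on u_k for \<mu>_k > 0 and 0 on the constants, which gives the
   same coefficients through r_e. *)

section \<open>The scalar delayed mode\<close>

(* The function a of the header: s I + e^{-\<tau>s} L acts as delay_char \<mu>_k \<tau> s on u_k. *)
definition delay_char :: "real \<Rightarrow> real \<Rightarrow> complex \<Rightarrow> complex" where
  "delay_char m t s = s + of_real m * exp (- (of_real t * s))"

lemma delay_char_margin_exists:
  fixes m t :: real
  assumes m: "m > 0" and t: "t \<ge> 0" and tm: "t * m < pi / 2"
  shows "\<exists>\<delta>>0. t * m * exp (t * \<delta>) < pi / 2 \<and> \<delta> < m * cos (t * m * exp (t * \<delta>))"
proof -
  have c1: "((\<lambda>\<delta>. t * m * exp (t * \<delta>)) \<longlongrightarrow> t * m * exp (t * 0)) (at_right 0)"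
    by (intro tendsto_intros)
  have c2: "((\<lambda>\<delta>. m * cos (t * m * exp (t * \<delta>)) - \<delta>) \<longlongrightarrow> m * cos (t * m * exp (t * 0)) - 0) (at_right 0)"
    by (intro tendsto_intros)
  have "cos (t * m) > 0"
  proof (rule cos_gt_zero_pi)
    have "t * m \<ge> 0" using t m by simp
    thus "- (pi / 2) < t * m" using pi_gt_zero by linarith
  qed (use tm in auto)
  hence p2: "m * cos (t * m * exp (t * 0)) - 0 > 0" using m by simp
  have p1: "t * m * exp (t * 0) < pi / 2" using tm by simp
  have ev: "\<forall>\<^sub>F \<delta> in at_right (0::real). 0 < \<delta> \<and> t * m * exp (t * \<delta>) < pi / 2 \<and> 0 < m * cos (t * m * exp (t * \<delta>)) - \<delta>"
    using order_tendstoD(2)[OF c1 p1] order_tendstoD(1)[OF c2 p2] eventually_at_right_less[of 0]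
    by eventually_elim auto
  then obtain \<delta> where "0 < \<delta> \<and> t * m * exp (t * \<delta>) < pi / 2 \<and> 0 < m * cos (t * m * exp (t * \<delta>)) - \<delta>"
    using eventually_happens trivial_limit_at_right_real by blast
  thus ?thesis by auto
qed

lemma delay_char_nonzero:
  fixes m t \<delta> :: real
  assumes m: "m > 0" and t: "t \<ge> 0" and d1: "t * m * exp (t * \<delta>) < pi / 2"
    and d2: "\<delta> < m * cos (t * m * exp (t * \<delta>))" and d0: "\<delta> > 0" and u: "Re u \<ge> - \<delta>"
  shows "delay_char m t u \<noteq> 0"
proof
  assume "delay_char m t u = 0"
  hence ue: "u = - (of_real m * exp (- (of_real t * u)))" unfolding delay_char_def by (simp add: add_eq_0_iff)
  define x where "x = Re u"
  define y where "y = Im u"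
  have nu: "cmod u = m * exp (- t * x)"
    using m by (subst ue) (simp add: norm_mult x_def)
  have "t * (- x) \<le> t * \<delta>" using t u unfolding x_def by (intro mult_left_mono) auto
  hence "exp (- t * x) \<le> exp (t * \<delta>)" by simp
  hence "\<bar>y\<bar> \<le> m * exp (t * \<delta>)"
  proof -
    have "m * exp (- t * x) \<le> m * exp (t * \<delta>)" using m \<open>exp (- t * x) \<le> exp (t * \<delta>)\<close> by simp
    thus ?thesis using abs_Im_le_cmod[of u] nu unfolding y_def by linarith
  qed
  hence ty: "\<bar>t * y\<bar> \<le> t * m * exp (t * \<delta>)"
    using t by (simp add: abs_mult mult_left_mono mult.assoc)
  have "cos (t * m * exp (t * \<delta>)) \<le> cos \<bar>t * y\<bar>"
    using ty d1 by (intro cos_monotone_0_pi_le) auto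
  hence cy: "cos (t * m * exp (t * \<delta>)) \<le> cos (t * y)" by simp
  have rx: "x = - (m * exp (- t * x) * cos (t * y))"
    unfolding x_def y_def by (subst ue) (simp add: Re_exp Im_exp)
  have "m * cos (t * m * exp (t * \<delta>)) > 0" using d2 d0 by linarith
  hence "cos (t * m * exp (t * \<delta>)) > 0" using m by (simp add: zero_less_mult_iff)
  hence "cos (t * y) > 0" using cy by linarith
  hence "m * exp (- t * x) * cos (t * y) > 0" using m by simp
  hence "x < 0" using rx by linarith
  hence "exp (- t * x) \<ge> 1" using t by (simp add: mult_nonneg_nonpos)
  hence "m * cos (t * y) * 1 \<le> m * cos (t * y) * exp (- t * x)" using m \<open>cos (t * y) > 0\<close>
    by (intro mult_left_mono) auto
  hence "- x \<ge> m * cos (t * y)" using rx by (simp add: algebra_simps)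
  also have "m * cos (t * y) \<ge> m * cos (t * m * exp (t * \<delta>))" using cy m by simp
  finally show False using d2 u x_def by linarith
qed

lemma delay_char_imag_nonzero:
  fixes m t :: real
  assumes m: "m > 0" and t: "t \<ge> 0" and tm: "t * m < pi / 2"
  shows "delay_char m t (\<i> * of_real y) \<noteq> 0"
proof -
  obtain \<delta> where d0: "\<delta> > 0" and d1: "t * m * exp (t * \<delta>) < pi / 2"
      and d2: "\<delta> < m * cos (t * m * exp (t * \<delta>))"
    using delay_char_margin_exists[OF m t tm] by blast
  show ?thesis by (rule delay_char_nonzero[OF m t d1 d2 d0]) (use d0 in simp)
qed

(* On the imaginary axis delay_gain is 1 / |a|^2. It splits as gain_right + gain_left
   (delay_gain_split), with gain_left in partial fractions so that the Cauchy integral formula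
   evaluates its integral around the poles \<plusminus>jm to 2\<pi>j gain_left_residues. *)
definition delay_gain :: "real \<Rightarrow> real \<Rightarrow> complex \<Rightarrow> complex" where
  "delay_gain m t s = 1 / (delay_char m t s * delay_char m t (- s))"
definition gain_right :: "real \<Rightarrow> real \<Rightarrow> complex \<Rightarrow> complex" where
  "gain_right m t s = - s / ((s^2 + (of_real m)^2) * delay_char m t s)"
definition gain_left_numerator :: "real \<Rightarrow> real \<Rightarrow> complex \<Rightarrow> complex" where
  "gain_left_numerator m t s = of_real m * exp (of_real t * s) / delay_char m t (- s)"
definition gain_left :: "real \<Rightarrow> real \<Rightarrow> complex \<Rightarrow> complex" where
  "gain_left m t s = (gain_left_numerator m t s / (s - \<i> * of_real m)
     - gain_left_numerator m t s / (s + \<i> * of_real m)) / (2 * \<i> * of_real m)"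
definition gain_left_residues :: "real \<Rightarrow> real \<Rightarrow> complex" where
  "gain_left_residues m t = (gain_left_numerator m t (\<i> * of_real m)
     - gain_left_numerator m t (- (\<i> * of_real m))) / (2 * \<i> * of_real m)"

lemma gain_left_eq:
  assumes "m > 0" "s \<noteq> \<i> * of_real m" "s \<noteq> - (\<i> * of_real m)"
  shows "gain_left m t s = gain_left_numerator m t s / (s^2 + (of_real m)^2)"
proof -
  have a: "s - \<i> * of_real m \<noteq> 0" "s + \<i> * of_real m \<noteq> 0" using assms
    by (auto simp: add_eq_0_iff)
  have b: "s^2 + (of_real m)^2 = (s - \<i> * of_real m) * (s + \<i> * of_real m)"
    by (simp add: algebra_simps power2_eq_square)
  have c: "1 / (s - \<i> * of_real m) - 1 / (s + \<i> * of_real m) = (2 * \<i> * of_real m) / ((s - \<i> * of_real m) * (s + \<i> * of_real m))"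
    using a by (simp add: field_simps)
  have "gain_left m t s = gain_left_numerator m t s * (1 / (s - \<i> * of_real m) - 1 / (s + \<i> * of_real m)) / (2 * \<i> * of_real m)"
    unfolding gain_left_def by (simp add: algebra_simps)
  also have "\<dots> = gain_left_numerator m t s / ((s - \<i> * of_real m) * (s + \<i> * of_real m))"
    unfolding c using assms(1) by simp
  finally show ?thesis unfolding b .
qed

lemma delay_gain_split:
  assumes m: "m > 0" and nz: "delay_char m t s \<noteq> 0" "delay_char m t (- s) \<noteq> 0"
    and s: "s \<noteq> \<i> * of_real m" "s \<noteq> - (\<i> * of_real m)"
  shows "delay_gain m t s = gain_right m t s + gain_left m t s"
proof -
  have a: "s - \<i> * of_real m \<noteq> 0" "s + \<i> * of_real m \<noteq> 0" using s
    by (auto simp: add_eq_0_iff)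
  have b: "s^2 + (of_real m)^2 = (s - \<i> * of_real m) * (s + \<i> * of_real m)"
    by (simp add: algebra_simps power2_eq_square)
  have c: "s^2 + (of_real m)^2 \<noteq> 0" unfolding b using a by simp
  have e: "exp (of_real t * s) * exp (- (of_real t * s)) = 1"
    by (simp add: exp_minus_inverse)
  have num: "- s * delay_char m t (- s) + of_real m * exp (of_real t * s) * delay_char m t s = s^2 + (of_real m)^2"
    unfolding delay_char_def using e by (simp add: algebra_simps power2_eq_square)
  define P where "P = s^2 + (of_real m)^2"
  define A where "A = delay_char m t s"
  define B where "B = delay_char m t (- s)"
  define E where "E = exp (of_real t * s)"
  have "gain_right m t s + gain_left m t s = - s / (P * A) + of_real m * E / (B * P)"
    unfolding gain_left_eq[OF m s] gain_right_def gain_left_numerator_def P_def A_def B_def E_def by simp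
  also have "\<dots> = (- s * B + of_real m * E * A) / (P * A * B)"
  proof -
    have "P \<noteq> 0" "A \<noteq> 0" "B \<noteq> 0" using c nz by (simp_all add: P_def A_def B_def)
    thus ?thesis by (simp add: field_simps)
  qed
  also have "\<dots> = P / (P * A * B)" using num unfolding P_def A_def B_def E_def by simp
  also have "\<dots> = delay_gain m t s" unfolding delay_gain_def A_def B_def P_def using c by simp
  finally show ?thesis by simp
qed

lemma norm_delay_char_ge:
  shows "cmod (delay_char m t s) \<ge> cmod s - \<bar>m\<bar> * exp (- t * Re s)"
proof -
  have "cmod (of_real m * exp (- (of_real t * s))) = \<bar>m\<bar> * exp (- t * Re s)"
    by (simp add: norm_mult)
  thus ?thesis unfolding delay_char_def using norm_diff_ineq[of s "of_real m * exp (- (of_real t * s))"]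
    by simp
qed

lemma norm_delay_char_ge_half:
  assumes m: "m > 0" and t: "t \<ge> 0" and "Re s \<ge> 0" and "cmod s \<ge> 2 * m"
  shows "cmod (delay_char m t s) \<ge> cmod s / 2"
proof -
  have "exp (- (t * Re s)) \<le> 1" using assms by (simp add: mult_nonneg_nonneg)
  hence h: "m * exp (- (t * Re s)) \<le> m" using m by (simp add: mult_left_le)
  have l: "cmod (delay_char m t s) \<ge> cmod s - m * exp (- (t * Re s))" using norm_delay_char_ge[of s m t] m by simp
  show ?thesis using h l assms by linarith
qed

lemma norm_delay_char_neg_ge_half:
  assumes m: "m > 0" and t: "t \<ge> 0" and "Re s \<le> \<delta>" and "cmod s \<ge> 2 * (m * exp (t * \<delta>))"
  shows "cmod (delay_char m t (- s)) \<ge> cmod s / 2"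
proof -
  have "t * Re s \<le> t * \<delta>" using assms by (intro mult_left_mono) auto
  hence "exp (t * Re s) \<le> exp (t * \<delta>)" by simp
  hence h: "m * exp (t * Re s) \<le> m * exp (t * \<delta>)" using m by simp
  have l: "cmod (delay_char m t (- s)) \<ge> cmod s - m * exp (t * Re s)" using norm_delay_char_ge[of "- s" m t] m by simp
  show ?thesis using h l assms by linarith
qed

lemma le_mult_exp_nonneg:
  fixes m t \<delta> :: real
  assumes "m > 0" "t \<ge> 0" "\<delta> > 0" shows "m \<le> m * exp (t * \<delta>)"
proof -
  have "0 \<le> t * \<delta>" by (rule mult_nonneg_nonneg) (use assms in auto)
  hence "1 \<le> exp (t * \<delta>)" by simp
  thus ?thesis using mult_left_mono[of 1 "exp (t * \<delta>)" m] assms by simp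
qed

lemma one_div_mult_le_of_ge_half:
  fixes x y r :: real
  assumes "x \<ge> r / 2" "y \<ge> r / 2" "r > 0"
  shows "1 / (x * y) \<le> 4 / r^2"
proof -
  have "1 / (x * y) \<le> 1 / ((r/2) * (r/2))"
    using assms by (intro divide_left_mono mult_mono mult_pos_pos) auto
  thus ?thesis by (simp add: power2_eq_square)
qed

lemma norm_delay_gain_le:
  assumes m: "m > 0" and t: "t \<ge> 0" and d: "\<delta> > 0" and s: "0 \<le> Re s" "Re s \<le> \<delta>"
    and Y: "cmod s \<ge> 2 * (m * exp (t * \<delta>))"
  shows "cmod (delay_gain m t s) \<le> 4 / (cmod s)^2"
proof -
  have K: "m \<le> m * exp (t * \<delta>)" by (rule le_mult_exp_nonneg) fact+
  have A: "cmod (delay_char m t s) \<ge> cmod s / 2" by (rule norm_delay_char_ge_half; use K Y s m t in linarith)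
  have B: "cmod (delay_char m t (- s)) \<ge> cmod s / 2" by (rule norm_delay_char_neg_ge_half) (use Y s m t in auto)
  have "cmod s > 0" using Y m K by linarith
  have "cmod (delay_gain m t s) = 1 / (cmod (delay_char m t s) * cmod (delay_char m t (- s)))"
    unfolding delay_gain_def by (simp add: norm_divide norm_mult)
  also have "\<dots> \<le> 4 / (cmod s)^2" by (rule one_div_mult_le_of_ge_half) (use A B \<open>cmod s > 0\<close> in auto)
  finally show ?thesis .
qed

lemma norm_sq_plus_sq_ge:
  assumes m: "m > 0" and "cmod s \<ge> 2 * m"
  shows "cmod (s^2 + (of_real m)^2) \<ge> (cmod s)^2 / 2"
proof -
  have "cmod (s^2 + (of_real m)^2) \<ge> cmod (s^2) - cmod ((of_real m :: complex)^2)"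
    by (rule norm_diff_ineq)
  moreover have "cmod ((of_real m :: complex)^2) = m^2" using m by (simp add: norm_power)
  moreover have "m^2 \<le> (cmod s)^2 / 4"
  proof -
    have "m \<le> cmod s / 2" using assms by simp
    hence "m^2 \<le> (cmod s / 2)^2" using m by (intro power_mono) auto
    thus ?thesis by (simp add: power_divide)
  qed
  moreover have "cmod (s^2) = (cmod s)^2" by (simp add: norm_power)
  moreover have "(cmod s)^2 \<ge> 0" by simp
  ultimately show ?thesis by linarith
qed

lemma norm_gain_right_le:
  assumes m: "m > 0" and t: "t \<ge> 0" and s: "0 \<le> Re s" and Y: "cmod s \<ge> 2 * m"
  shows "cmod (gain_right m t s) \<le> 4 / (cmod s)^2"
proof -
  have A: "cmod (delay_char m t s) \<ge> cmod s / 2" using Y s m t by (intro norm_delay_char_ge_half) auto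
  have P: "cmod (s^2 + (of_real m)^2) \<ge> (cmod s)^2 / 2" using m Y by (rule norm_sq_plus_sq_ge)
  have sp: "cmod s > 0" using Y m by linarith
  have "cmod (gain_right m t s) = cmod s / (cmod (s^2 + (of_real m)^2) * cmod (delay_char m t s))"
    unfolding gain_right_def by (simp add: norm_divide norm_mult)
  also have "\<dots> \<le> cmod s / (((cmod s)^2 / 2) * (cmod s / 2))"
    using A P sp by (intro divide_left_mono mult_mono mult_pos_pos) auto
  also have "\<dots> = 4 / (cmod s)^2" using sp by (simp add: field_simps power2_eq_square)
  finally show ?thesis .
qed

lemma norm_gain_left_le:
  assumes m: "m > 0" and t: "t \<ge> 0" and d: "\<delta> > 0" and s: "Re s \<le> \<delta>"
    and Y: "cmod s \<ge> 2 * (m * exp (t * \<delta>))"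
  shows "cmod (gain_left m t s) \<le> 4 / (cmod s)^2"
proof -
  define K where "K = m * exp (t * \<delta>)"
  have K: "m \<le> K" unfolding K_def by (rule le_mult_exp_nonneg) fact+
  have sp: "cmod s > 0" using Y m K K_def by linarith
  have B: "cmod (delay_char m t (- s)) \<ge> cmod s / 2" by (rule norm_delay_char_neg_ge_half) (use Y s m t in auto)
  have s2: "cmod s \<ge> 2 * m" using Y K K_def by linarith
  have P: "cmod (s^2 + (of_real m)^2) \<ge> (cmod s)^2 / 2" by (rule norm_sq_plus_sq_ge) (use m s2 in auto)
  have ne: "s \<noteq> \<i> * of_real m" "s \<noteq> - (\<i> * of_real m)" using s2 m
    by (auto simp: norm_mult)
  have "t * Re s \<le> t * \<delta>" using assms by (intro mult_left_mono) auto
  hence ex: "m * exp (t * Re s) \<le> K" unfolding K_def using m by simp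
  have "cmod (gain_left m t s) = (m * exp (t * Re s)) / (cmod (delay_char m t (- s)) * cmod (s^2 + (of_real m)^2))"
    unfolding gain_left_eq[OF m ne] gain_left_numerator_def using m by (simp add: norm_divide norm_mult)
  also have "\<dots> \<le> K / ((cmod s / 2) * ((cmod s)^2 / 2))"
    using B P sp ex m K by (intro frac_le mult_mono mult_pos_pos) auto
  also have "\<dots> = 4 * K / (cmod s)^3" using sp by (simp add: field_simps power2_eq_square power3_eq_cube)
  also have "\<dots> \<le> 4 / (cmod s)^2"
  proof -
    have "4 * K / (cmod s)^3 = (4 / (cmod s)^2) * (K / cmod s)" using sp
      by (simp add: field_simps power2_eq_square power3_eq_cube)
    also have "\<dots> \<le> (4 / (cmod s)^2) * 1"
    proof (rule mult_left_mono)
      have "m * exp (t * \<delta>) > 0" using m by simp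
      thus "K / cmod s \<le> 1" using Y sp K_def by simp
    qed simp
    finally show ?thesis by simp
  qed
  finally show ?thesis .
qed

section \<open>The scalar integral by residues\<close>

lemma rectpath_integral_split:
  assumes I: "(f has_contour_integral I) (rectpath a1 a3)" and c: "continuous_on S f"
    and S: "path_image (rectpath a1 a3) \<subseteq> S"
  shows "I = contour_integral (linepath a1 (Complex (Re a3) (Im a1))) f
           + contour_integral (linepath (Complex (Re a3) (Im a1)) a3) f
           + contour_integral (linepath a3 (Complex (Re a1) (Im a3))) f
           + contour_integral (linepath (Complex (Re a1) (Im a3)) a1) f"
proof -
  define a2 where "a2 = Complex (Re a3) (Im a1)"
  define a4 where "a4 = Complex (Re a1) (Im a3)"
  have r: "rectpath a1 a3 = linepath a1 a2 +++ linepath a2 a3 +++ linepath a3 a4 +++ linepath a4 a1"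
    unfolding rectpath_def a2_def a4_def Let_def by simp
  have segs: "closed_segment a1 a2 \<subseteq> S" "closed_segment a2 a3 \<subseteq> S"
     "closed_segment a3 a4 \<subseteq> S" "closed_segment a4 a1 \<subseteq> S"
    using S unfolding r by (auto simp: path_image_join)
  have h: "\<And>a b. closed_segment a b \<subseteq> S \<Longrightarrow> (f has_contour_integral contour_integral (linepath a b) f) (linepath a b)"
    by (intro has_contour_integral_integral contour_integrable_continuous_linepath continuous_on_subset[OF c])
  have "(f has_contour_integral (contour_integral (linepath a1 a2) f + (contour_integral (linepath a2 a3) f
      + (contour_integral (linepath a3 a4) f + contour_integral (linepath a4 a1) f)))) (rectpath a1 a3)"
    unfolding r
    by (intro has_contour_integral_join h segs valid_path_join valid_path_linepath) auto
  hence "I = contour_integral (linepath a1 a2) f + (contour_integral (linepath a2 a3) f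
      + (contour_integral (linepath a3 a4) f + contour_integral (linepath a4 a1) f))"
    using I has_contour_integral_unique by blast
  thus ?thesis unfolding a2_def a4_def by (simp add: add.assoc)
qed

lemma norm_linepath_integral_le:
  assumes c: "continuous_on S f" and S: "closed_segment a b \<subseteq> S" and B: "0 \<le> B"
    and b: "\<And>z. z \<in> closed_segment a b \<Longrightarrow> cmod (f z) \<le> B"
  shows "cmod (contour_integral (linepath a b) f) \<le> B * cmod (b - a)"
  by (rule contour_integral_bound_linepath)
     (use contour_integrable_continuous_linepath continuous_on_subset[OF c S] B b in auto)

lemma has_contour_integral_imag_segment:
  fixes \<phi> :: "real \<Rightarrow> real" and g :: "complex \<Rightarrow> complex"
  assumes J: "(\<phi> has_integral J) {-Y..Y}" and Y: "Y > 0" and g: "\<And>y. g (Complex 0 y) = of_real (\<phi> y)"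
  shows "(g has_contour_integral (\<i> * of_real J)) (linepath (Complex 0 (-Y)) (Complex 0 Y))"
proof -
  have "((\<lambda>x. \<phi> ((2*Y) *\<^sub>R x + (-Y))) has_integral (1 / \<bar>2*Y\<bar> ^ DIM(real)) *\<^sub>R J)
          ((\<lambda>x. (1 / (2*Y)) *\<^sub>R x + - ((1 / (2*Y)) *\<^sub>R (-Y))) ` cbox (-Y) Y)"
    by (rule has_integral_affinity) (use J Y in auto)
  moreover have "(\<lambda>x. (1 / (2*Y)) *\<^sub>R x + - ((1 / (2*Y)) *\<^sub>R (-Y))) ` cbox (-Y) Y = {0..1}"
  proof -
    have "(\<lambda>x. (1 / (2*Y)) *\<^sub>R x + - ((1 / (2*Y)) *\<^sub>R (-Y))) = (\<lambda>x. (1 / (2*Y)) * x + 1/2)"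
      using Y by (auto simp: fun_eq_iff)
    moreover have "(\<lambda>x. (1 / (2*Y)) * x + 1/2) ` {-Y..Y} = {0..1}"
      using Y by (subst image_affinity_atLeastAtMost) auto
    ultimately show ?thesis using Y by simp
  qed
  ultimately have "((\<lambda>x. \<phi> (2 * Y * x - Y)) has_integral J / (2 * Y)) {0..1}"
    using Y by simp
  hence "((\<lambda>x. (2 * Y) * \<phi> (2 * Y * x - Y)) has_integral (2 * Y) * (J / (2 * Y))) {0..1}"
    by (rule has_integral_mult_right)
  hence "((\<lambda>x. (2 * Y) * \<phi> (2 * Y * x - Y)) has_integral J) {0..1}" using Y by simp
  hence "((of_real \<circ> (\<lambda>x. (2 * Y) * \<phi> (2 * Y * x - Y))) has_integral (of_real J :: complex)) {0..1}"
    by (rule has_integral_linear) (rule bounded_linear_of_real)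
  hence "((\<lambda>x. \<i> * (of_real ((2 * Y) * \<phi> (2 * Y * x - Y)))) has_integral \<i> * of_real J) {0..1}"
    unfolding o_def by (rule has_integral_mult_right)
  moreover have "\<And>x. g (linepath (Complex 0 (-Y)) (Complex 0 Y) x) * (Complex 0 Y - Complex 0 (-Y))
       = \<i> * (of_real ((2 * Y) * \<phi> (2 * Y * x - Y)))"
  proof -
    fix x
    have "linepath (Complex 0 (-Y)) (Complex 0 Y) x = Complex 0 (2 * Y * x - Y)"
      by (simp add: linepath_def complex_eq_iff algebra_simps)
    moreover have "Complex 0 Y - Complex 0 (-Y) = \<i> * of_real (2 * Y)"
      by (simp add: complex_eq_iff)
    ultimately show "g (linepath (Complex 0 (-Y)) (Complex 0 Y) x) * (Complex 0 Y - Complex 0 (-Y))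
       = \<i> * (of_real ((2 * Y) * \<phi> (2 * Y * x - Y)))"
      using g by (simp add: algebra_simps)
  qed
  ultimately show ?thesis by (simp add: has_contour_integral_linepath)
qed

lemma holomorphic_delay_char: "delay_char m t holomorphic_on A"
  unfolding delay_char_def by (intro holomorphic_intros)

lemma holomorphic_delay_char_neg: "(\<lambda>s. delay_char m t (- s)) holomorphic_on A"
  unfolding delay_char_def by (intro holomorphic_intros)

lemma holomorphic_delay_gain:
  assumes "\<And>s. s \<in> A \<Longrightarrow> delay_char m t s \<noteq> 0" "\<And>s. s \<in> A \<Longrightarrow> delay_char m t (- s) \<noteq> 0"
  shows "delay_gain m t holomorphic_on A"
proof -
  have "(\<lambda>s. 1 / (delay_char m t s * delay_char m t (- s))) holomorphic_on A"
    using assms by (intro holomorphic_intros holomorphic_delay_char holomorphic_delay_char_neg) auto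
  thus ?thesis unfolding delay_gain_def[abs_def] .
qed

lemma holomorphic_gain_right:
  assumes "\<And>s. s \<in> A \<Longrightarrow> delay_char m t s \<noteq> 0" "\<And>s. s \<in> A \<Longrightarrow> s^2 + (of_real m)^2 \<noteq> 0"
  shows "gain_right m t holomorphic_on A"
proof -
  have "(\<lambda>s. - s / ((s^2 + (of_real m)^2) * delay_char m t s)) holomorphic_on A"
    using assms by (intro holomorphic_intros holomorphic_delay_char) auto
  thus ?thesis unfolding gain_right_def[abs_def] .
qed

lemma holomorphic_gain_left_numerator:
  assumes "\<And>s. s \<in> A \<Longrightarrow> delay_char m t (- s) \<noteq> 0"
  shows "gain_left_numerator m t holomorphic_on A"
proof -
  have "(\<lambda>s. of_real m * exp (of_real t * s) / delay_char m t (- s)) holomorphic_on A"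
    using assms by (intro holomorphic_intros holomorphic_delay_char_neg) auto
  thus ?thesis unfolding gain_left_numerator_def[abs_def] .
qed

lemma holomorphic_gain_left:
  assumes "\<And>s. s \<in> A \<Longrightarrow> delay_char m t (- s) \<noteq> 0" "m \<noteq> 0"
    "\<i> * of_real m \<notin> A" "- (\<i> * of_real m) \<notin> A"
  shows "gain_left m t holomorphic_on A"
proof -
  have q: "gain_left_numerator m t holomorphic_on A" using assms(1) by (rule holomorphic_gain_left_numerator)
  have "(\<lambda>s. (gain_left_numerator m t s / (s - \<i> * of_real m) - gain_left_numerator m t s / (s + \<i> * of_real m)) / (2 * \<i> * of_real m)) holomorphic_on A"
    using assms(2-4) by (intro holomorphic_intros q) (auto simp: add_eq_0_iff)
  thus ?thesis unfolding gain_left_def[abs_def] .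
qed

lemma linepath_integral_decay_bound:
  assumes c: "continuous_on S f" and S: "closed_segment a b \<subseteq> S" and Y: "Y > 0"
    and L: "cmod (b - a) \<le> 2 * Y"
    and far: "\<And>z. z \<in> closed_segment a b \<Longrightarrow> Y \<le> cmod z"
    and decay: "\<And>z. z \<in> closed_segment a b \<Longrightarrow> cmod (f z) \<le> 4 / (cmod z)^2"
  shows "cmod (contour_integral (linepath a b) f) \<le> 8 / Y"
proof -
  have "cmod (f z) \<le> 4 / Y^2" if "z \<in> closed_segment a b" for z
  proof -
    have "4 / (cmod z)^2 \<le> 4 / Y^2"
      using Y far[OF that] by (intro divide_left_mono power_mono mult_pos_pos) auto
    thus ?thesis using decay[OF that] by linarith
  qed
  hence "cmod (contour_integral (linepath a b) f) \<le> 4 / Y^2 * cmod (b - a)"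
    by (intro norm_linepath_integral_le[OF c S]) auto
  also have "\<dots> \<le> 4 / Y^2 * (2 * Y)" using L by (intro mult_left_mono) auto
  also have "\<dots> = 8 / Y" using Y by (simp add: field_simps power2_eq_square)
  finally show ?thesis .
qed

lemma horizontal_edge_decay_bound:
  assumes c: "continuous_on S f" and Y: "Y > 0" "\<bar>y\<bar> = Y" and L: "\<bar>x2 - x1\<bar> \<le> 2 * Y"
    and S: "\<And>z. Im z = y \<Longrightarrow> min x1 x2 \<le> Re z \<Longrightarrow> Re z \<le> max x1 x2 \<Longrightarrow> z \<in> S"
    and decay: "\<And>z. min x1 x2 \<le> Re z \<Longrightarrow> Re z \<le> max x1 x2 \<Longrightarrow> Y \<le> cmod z
      \<Longrightarrow> cmod (f z) \<le> 4 / (cmod z)^2"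
  shows "cmod (contour_integral (linepath (Complex x1 y) (Complex x2 y)) f) \<le> 8 / Y"
proof -
  have seg: "Im z = y \<and> min x1 x2 \<le> Re z \<and> Re z \<le> max x1 x2 \<and> Y \<le> cmod z"
    if "z \<in> closed_segment (Complex x1 y) (Complex x2 y)" for z
    using that Y abs_Im_le_cmod[of z]
    by (auto simp: closed_segment_same_Im closed_segment_eq_real_ivl split: if_splits)
  have "cmod (Complex x2 y - Complex x1 y) \<le> 2 * Y" using L by (simp add: cmod_def)
  thus ?thesis
    by (intro linepath_integral_decay_bound[OF c _ Y(1)]) (use seg S decay in blast)+
qed

lemma vertical_edge_decay_bound:
  assumes c: "continuous_on S f" and Y: "Y > 0" "\<bar>x\<bar> = Y" and L: "\<bar>y2 - y1\<bar> \<le> 2 * Y"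
    and S: "\<And>z. Re z = x \<Longrightarrow> min y1 y2 \<le> Im z \<Longrightarrow> Im z \<le> max y1 y2 \<Longrightarrow> z \<in> S"
    and decay: "\<And>z. Re z = x \<Longrightarrow> Y \<le> cmod z \<Longrightarrow> cmod (f z) \<le> 4 / (cmod z)^2"
  shows "cmod (contour_integral (linepath (Complex x y1) (Complex x y2)) f) \<le> 8 / Y"
proof -
  have seg: "Re z = x \<and> min y1 y2 \<le> Im z \<and> Im z \<le> max y1 y2 \<and> Y \<le> cmod z"
    if "z \<in> closed_segment (Complex x y1) (Complex x y2)" for z
    using that Y abs_Re_le_cmod[of z]
    by (auto simp: closed_segment_same_Re closed_segment_eq_real_ivl split: if_splits)
  have "cmod (Complex x y2 - Complex x y1) \<le> 2 * Y" using L by (simp add: cmod_def)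
  thus ?thesis
    by (intro linepath_integral_decay_bound[OF c _ Y(1)]) (use seg S decay in blast)+
qed

lemma contour_integral_linepath_swap:
  "contour_integral (linepath a b) f = - contour_integral (linepath b a) f"
  by (metis contour_integral_reversepath reversepath_linepath valid_path_linepath)

context
  fixes m t \<delta> Y d :: real
  assumes m: "m > 0" and t: "t \<ge> 0" and d: "0 < d" "d < \<delta>"
    and nz: "\<And>u. Re u \<ge> - \<delta> \<Longrightarrow> delay_char m t u \<noteq> 0"
    and Y: "Y \<ge> 2 * (m * exp (t * \<delta>)) + \<delta> + m + 1"
begin

lemma rectangle_size:
  "0 < \<delta>" "0 < Y" "2 * (m * exp (t * \<delta>)) \<le> Y" "2 * m \<le> Y" "\<delta> < Y" "m < Y"
proof -
  show d0: "0 < \<delta>" using d by linarith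
  have "m \<le> m * exp (t * \<delta>)" by (rule le_mult_exp_nonneg) (use m t d0 in auto)
  thus "0 < Y" "2 * (m * exp (t * \<delta>)) \<le> Y" "2 * m \<le> Y" "\<delta> < Y" "m < Y"
    using Y m d0 by linarith+
qed

lemma delay_char_neg_nonzero: "Re u \<le> \<delta> \<Longrightarrow> delay_char m t (- u) \<noteq> 0"
  using nz by force

lemma holomorphic_delay_gain_strip:
  "delay_gain m t holomorphic_on {s. - \<delta> < Re s} \<inter> {s. Re s < \<delta>}"
  by (rule holomorphic_delay_gain) (use nz delay_char_neg_nonzero in auto)

lemma holomorphic_gain_right_halfplane: "gain_right m t holomorphic_on {s. 0 < Re s}"
proof (rule holomorphic_gain_right)
  fix s :: complex assume s: "s \<in> {s. 0 < Re s}"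
  thus "delay_char m t s \<noteq> 0" using nz rectangle_size(1) by auto
  show "s^2 + (of_real m)^2 \<noteq> 0"
  proof
    assume "s^2 + (of_real m)^2 = 0"
    hence "(s - \<i> * of_real m) * (s + \<i> * of_real m) = 0"
      by (simp add: algebra_simps power2_eq_square)
    thus False using s by (auto simp: add_eq_0_iff dest: arg_cong[where f=Re])
  qed
qed

lemma holomorphic_gain_left_halfplane:
  "gain_left m t holomorphic_on {s. Re s < \<delta>} - {\<i> * of_real m, - (\<i> * of_real m)}"
  by (rule holomorphic_gain_left) (use delay_char_neg_nonzero m in auto)

lemma delay_gain_axis_to_line:
  "cmod (contour_integral (linepath (Complex 0 (-Y)) (Complex 0 Y)) (delay_gain m t)
       - contour_integral (linepath (Complex d (-Y)) (Complex d Y)) (delay_gain m t)) \<le> 16 / Y"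
proof -
  note size = rectangle_size
  define S where "S = {s. - \<delta> < Re s} \<inter> {s. Re s < \<delta>}"
  have hF: "delay_gain m t holomorphic_on S" unfolding S_def by (rule holomorphic_delay_gain_strip)
  have cF: "continuous_on S (delay_gain m t)" by (rule holomorphic_on_imp_continuous_on[OF hF])
  have sub: "path_image (rectpath (Complex 0 (-Y)) (Complex d Y)) \<subseteq> S"
  proof -
    have "path_image (rectpath (Complex 0 (-Y)) (Complex d Y)) \<subseteq> cbox (Complex 0 (-Y)) (Complex d Y)"
      by (rule path_image_rectpath_subset_cbox) (use d size in auto)
    also have "\<dots> \<subseteq> S" using d by (auto simp: S_def in_cbox_complex_iff)
    finally show ?thesis .
  qed
  have "(delay_gain m t has_contour_integral 0) (rectpath (Complex 0 (-Y)) (Complex d Y))"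
    by (rule Cauchy_theorem_convex_simple[OF hF])
       (use sub in \<open>auto simp: S_def intro: convex_Int convex_halfspace_Re_gt convex_halfspace_Re_lt\<close>)
  note split = rectpath_integral_split[OF this cF sub, unfolded complex.sel]
  have decay: "cmod (delay_gain m t z) \<le> 4 / (cmod z)^2" if "0 \<le> Re z" "Re z \<le> d" "Y \<le> cmod z" for z
    using that d size by (intro norm_delay_gain_le[OF m t size(1)]) auto
  have bottom: "cmod (contour_integral (linepath (Complex 0 (-Y)) (Complex d (-Y))) (delay_gain m t)) \<le> 8 / Y"
    by (rule horizontal_edge_decay_bound[OF cF size(2)]) (use d size decay in \<open>auto simp: S_def\<close>)
  have top: "cmod (contour_integral (linepath (Complex d Y) (Complex 0 Y)) (delay_gain m t)) \<le> 8 / Y"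
    by (rule horizontal_edge_decay_bound[OF cF size(2)]) (use d size decay in \<open>auto simp: S_def\<close>)
  have "contour_integral (linepath (Complex 0 (-Y)) (Complex 0 Y)) (delay_gain m t)
       - contour_integral (linepath (Complex d (-Y)) (Complex d Y)) (delay_gain m t)
     = contour_integral (linepath (Complex 0 (-Y)) (Complex d (-Y))) (delay_gain m t)
       + contour_integral (linepath (Complex d Y) (Complex 0 Y)) (delay_gain m t)"
    using split contour_integral_linepath_swap[of "Complex 0 (-Y)" "Complex 0 Y" "delay_gain m t"]
    by (simp add: complex_eq_iff)
  thus ?thesis using norm_triangle_le[OF add_mono[OF bottom top]] by simp
qed

lemma gain_right_line_bound:
  "cmod (contour_integral (linepath (Complex d (-Y)) (Complex d Y)) (gain_right m t)) \<le> 24 / Y"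
proof -
  note size = rectangle_size
  define S where "S = {s. 0 < Re s}"
  have hT: "gain_right m t holomorphic_on S" unfolding S_def by (rule holomorphic_gain_right_halfplane)
  have cT: "continuous_on S (gain_right m t)" by (rule holomorphic_on_imp_continuous_on[OF hT])
  have sub: "path_image (rectpath (Complex d (-Y)) (Complex Y Y)) \<subseteq> S"
  proof -
    have "path_image (rectpath (Complex d (-Y)) (Complex Y Y)) \<subseteq> cbox (Complex d (-Y)) (Complex Y Y)"
      by (rule path_image_rectpath_subset_cbox) (use d size in auto)
    also have "\<dots> \<subseteq> S" using d by (auto simp: S_def in_cbox_complex_iff)
    finally show ?thesis .
  qed
  have "(gain_right m t has_contour_integral 0) (rectpath (Complex d (-Y)) (Complex Y Y))"
    by (rule Cauchy_theorem_convex_simple[OF hT]) (use sub in \<open>auto simp: S_def intro: convex_halfspace_Re_gt\<close>)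
  note split = rectpath_integral_split[OF this cT sub, unfolded complex.sel]
  have decay: "cmod (gain_right m t z) \<le> 4 / (cmod z)^2" if "0 \<le> Re z" "Y \<le> cmod z" for z
    using that size by (intro norm_gain_right_le[OF m t]) auto
  have bottom: "cmod (contour_integral (linepath (Complex d (-Y)) (Complex Y (-Y))) (gain_right m t)) \<le> 8 / Y"
    by (rule horizontal_edge_decay_bound[OF cT size(2)]) (use d size decay in \<open>auto simp: S_def\<close>)
  have right: "cmod (contour_integral (linepath (Complex Y (-Y)) (Complex Y Y)) (gain_right m t)) \<le> 8 / Y"
    by (rule vertical_edge_decay_bound[OF cT size(2)]) (use size decay in \<open>auto simp: S_def\<close>)
  have top: "cmod (contour_integral (linepath (Complex Y Y) (Complex d Y)) (gain_right m t)) \<le> 8 / Y"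
    by (rule horizontal_edge_decay_bound[OF cT size(2)]) (use d size decay in \<open>auto simp: S_def\<close>)
  have eq: "contour_integral (linepath (Complex d (-Y)) (Complex d Y)) (gain_right m t)
     = contour_integral (linepath (Complex d (-Y)) (Complex Y (-Y))) (gain_right m t)
       + contour_integral (linepath (Complex Y (-Y)) (Complex Y Y)) (gain_right m t)
       + contour_integral (linepath (Complex Y Y) (Complex d Y)) (gain_right m t)"
    using split contour_integral_linepath_swap[of "Complex d (-Y)" "Complex d Y" "gain_right m t"]
    by (simp add: complex_eq_iff)
  have "cmod (contour_integral (linepath (Complex d (-Y)) (Complex Y (-Y))) (gain_right m t)
       + contour_integral (linepath (Complex Y (-Y)) (Complex Y Y)) (gain_right m t)
       + contour_integral (linepath (Complex Y Y) (Complex d Y)) (gain_right m t)) \<le> 8/Y + 8/Y + 8/Y"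
    by (intro order.trans[OF norm_triangle_ineq] add_mono bottom right top)
  thus ?thesis unfolding eq by simp
qed

lemma gain_left_rectangle_integral:
  "path_image (rectpath (Complex (-Y) (-Y)) (Complex d Y))
     \<subseteq> {s. Re s < \<delta>} - {\<i> * of_real m, - (\<i> * of_real m)}"
  "(gain_left m t has_contour_integral (2 * pi * \<i> * gain_left_residues m t))
     (rectpath (Complex (-Y) (-Y)) (Complex d Y))"
proof -
  note size = rectangle_size
  define S where "S = {s. Re s < \<delta>}"
  define R where "R = rectpath (Complex (-Y) (-Y)) (Complex d Y)"
  have hq: "gain_left_numerator m t holomorphic_on S"
    by (rule holomorphic_gain_left_numerator) (use delay_char_neg_nonzero in \<open>auto simp: S_def\<close>)
  have sub: "path_image R \<subseteq> cbox (Complex (-Y) (-Y)) (Complex d Y)"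
    unfolding R_def by (rule path_image_rectpath_subset_cbox) (use d size in auto)
  have cb: "cbox (Complex (-Y) (-Y)) (Complex d Y) \<subseteq> S" using d by (auto simp: S_def in_cbox_complex_iff)
  have inb: "\<i> * of_real m \<in> box (Complex (-Y) (-Y)) (Complex d Y)"
            "- (\<i> * of_real m) \<in> box (Complex (-Y) (-Y)) (Complex d Y)"
    using d size m by (auto simp: in_box_complex_iff)
  have notp: "\<i> * of_real m \<notin> path_image R" "- (\<i> * of_real m) \<notin> path_image R"
    using inb path_image_rectpath_inter_box[of "Complex (-Y) (-Y)" "Complex d Y"] d size
    unfolding R_def by auto
  show "path_image (rectpath (Complex (-Y) (-Y)) (Complex d Y))
     \<subseteq> {s. Re s < \<delta>} - {\<i> * of_real m, - (\<i> * of_real m)}"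
    using sub cb notp unfolding R_def S_def by blast
  have wn: "winding_number R (\<i> * of_real m) = 1" "winding_number R (- (\<i> * of_real m)) = 1"
    unfolding R_def using inb by (auto intro!: winding_number_rectpath)
  have int_in: "\<i> * of_real m \<in> interior S" "- (\<i> * of_real m) \<in> interior S"
    using size(1) by (auto simp: interior_open open_halfspace_Re_lt S_def)
  have cS: "convex S" unfolding S_def by (rule convex_halfspace_Re_lt)
  have "((\<lambda>w. gain_left_numerator m t w / (w - \<i> * of_real m))
          has_contour_integral (2 * pi * \<i> * 1 * gain_left_numerator m t (\<i> * of_real m))) R"
    using Cauchy_integral_formula_convex_simple[OF cS hq int_in(1), of R] sub cb notp wn
    unfolding R_def by auto
  moreover have "((\<lambda>w. gain_left_numerator m t w / (w - - (\<i> * of_real m)))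
          has_contour_integral (2 * pi * \<i> * 1 * gain_left_numerator m t (- (\<i> * of_real m)))) R"
    using Cauchy_integral_formula_convex_simple[OF cS hq int_in(2), of R] sub cb notp wn
    unfolding R_def by auto
  ultimately have "((\<lambda>w. (gain_left_numerator m t w / (w - \<i> * of_real m)
      - gain_left_numerator m t w / (w - - (\<i> * of_real m))) / (2 * \<i> * of_real m))
      has_contour_integral ((2 * pi * \<i> * 1 * gain_left_numerator m t (\<i> * of_real m)
        - 2 * pi * \<i> * 1 * gain_left_numerator m t (- (\<i> * of_real m))) / (2 * \<i> * of_real m))) R"
    by (intro has_contour_integral_div has_contour_integral_diff)
  thus "(gain_left m t has_contour_integral (2 * pi * \<i> * gain_left_residues m t))
     (rectpath (Complex (-Y) (-Y)) (Complex d Y))"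
    unfolding R_def gain_left_def[abs_def] gain_left_residues_def
    by (simp add: algebra_simps diff_divide_distrib)
qed

lemma gain_left_line_residues:
  "cmod (contour_integral (linepath (Complex d (-Y)) (Complex d Y)) (gain_left m t)
       - 2 * pi * \<i> * gain_left_residues m t) \<le> 24 / Y"
proof -
  note size = rectangle_size
  define S where "S = {s. Re s < \<delta>} - {\<i> * of_real m, - (\<i> * of_real m)}"
  have cT: "continuous_on S (gain_left m t)"
    unfolding S_def by (rule holomorphic_on_imp_continuous_on[OF holomorphic_gain_left_halfplane])
  note split = rectpath_integral_split[OF gain_left_rectangle_integral(2) cT
      gain_left_rectangle_integral(1)[folded S_def], unfolded complex.sel]
  have decay: "cmod (gain_left m t z) \<le> 4 / (cmod z)^2" if "Re z \<le> \<delta>" "Y \<le> cmod z" for z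
    using that size by (intro norm_gain_left_le[OF m t size(1)]) auto
  have bottom: "cmod (contour_integral (linepath (Complex (-Y) (-Y)) (Complex d (-Y))) (gain_left m t)) \<le> 8 / Y"
    by (rule horizontal_edge_decay_bound[OF cT size(2)])
       (use m d size decay in \<open>auto simp: S_def dest: arg_cong[where f=Im]\<close>)
  have top: "cmod (contour_integral (linepath (Complex d Y) (Complex (-Y) Y)) (gain_left m t)) \<le> 8 / Y"
    by (rule horizontal_edge_decay_bound[OF cT size(2)])
       (use m d size decay in \<open>auto simp: S_def dest: arg_cong[where f=Im]\<close>)
  have left: "cmod (contour_integral (linepath (Complex (-Y) Y) (Complex (-Y) (-Y))) (gain_left m t)) \<le> 8 / Y"
    by (rule vertical_edge_decay_bound[OF cT size(2)])
       (use size decay in \<open>auto simp: S_def dest: arg_cong[where f=Re]\<close>)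
  have eq: "contour_integral (linepath (Complex d (-Y)) (Complex d Y)) (gain_left m t)
       - 2 * pi * \<i> * gain_left_residues m t
     = - (contour_integral (linepath (Complex (-Y) (-Y)) (Complex d (-Y))) (gain_left m t)
       + contour_integral (linepath (Complex d Y) (Complex (-Y) Y)) (gain_left m t)
       + contour_integral (linepath (Complex (-Y) Y) (Complex (-Y) (-Y))) (gain_left m t))"
    using split by (simp add: complex_eq_iff)
  have "cmod (contour_integral (linepath (Complex (-Y) (-Y)) (Complex d (-Y))) (gain_left m t)
       + contour_integral (linepath (Complex d Y) (Complex (-Y) Y)) (gain_left m t)
       + contour_integral (linepath (Complex (-Y) Y) (Complex (-Y) (-Y))) (gain_left m t))
       \<le> 8/Y + 8/Y + 8/Y"
    by (intro order.trans[OF norm_triangle_ineq] add_mono bottom top left)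
  thus ?thesis unfolding eq norm_minus_cancel by simp
qed

lemma delay_gain_line_split:
  "contour_integral (linepath (Complex d (-Y)) (Complex d Y)) (delay_gain m t)
     = contour_integral (linepath (Complex d (-Y)) (Complex d Y)) (gain_right m t)
     + contour_integral (linepath (Complex d (-Y)) (Complex d Y)) (gain_left m t)"
proof -
  let ?g = "linepath (Complex d (-Y)) (Complex d Y)"
  have line: "Re z = d" if "z \<in> closed_segment (Complex d (-Y)) (Complex d Y)" for z
    using that by (auto simp: closed_segment_same_Re)
  have "contour_integral ?g (delay_gain m t) = contour_integral ?g (\<lambda>z. gain_right m t z + gain_left m t z)"
  proof (rule contour_integral_eq)
    fix z assume "z \<in> path_image ?g"
    hence "Re z = d" using line by auto
    thus "delay_gain m t z = gain_right m t z + gain_left m t z"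
      by (intro delay_gain_split[OF m]) (use d nz delay_char_neg_nonzero in \<open>auto dest: arg_cong[where f=Re]\<close>)
  qed
  also have "\<dots> = contour_integral ?g (gain_right m t) + contour_integral ?g (gain_left m t)"
  proof (rule contour_integral_add)
    show "gain_right m t contour_integrable_on ?g"
      by (rule contour_integrable_continuous_linepath, rule continuous_on_subset,
          rule holomorphic_on_imp_continuous_on[OF holomorphic_gain_right_halfplane])
         (use line d in force)
    show "gain_left m t contour_integrable_on ?g"
      by (rule contour_integrable_continuous_linepath, rule continuous_on_subset,
          rule holomorphic_on_imp_continuous_on[OF holomorphic_gain_left_halfplane])
         (use line d in \<open>force dest: arg_cong[where f=Re]\<close>)
  qed
  finally show ?thesis .
qed

end

lemma delay_gain_axis_estimate:
  fixes m t \<delta> Y :: real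
  assumes m: "m > 0" and t: "t \<ge> 0" and d0: "\<delta> > 0"
    and nz: "\<And>u. Re u \<ge> - \<delta> \<Longrightarrow> delay_char m t u \<noteq> 0"
    and Y: "Y \<ge> 2 * (m * exp (t * \<delta>)) + \<delta> + m + 1"
  shows "cmod (contour_integral (linepath (Complex 0 (-Y)) (Complex 0 Y)) (delay_gain m t)
           - 2 * pi * \<i> * gain_left_residues m t) \<le> 64 / Y"
proof -
  have d: "0 < \<delta> / 2" "\<delta> / 2 < \<delta>" using d0 by auto
  let ?I = "\<lambda>f. contour_integral (linepath (Complex (\<delta> / 2) (-Y)) (Complex (\<delta> / 2) Y)) f"
  let ?A = "contour_integral (linepath (Complex 0 (-Y)) (Complex 0 Y)) (delay_gain m t)"
  have "?A - 2 * pi * \<i> * gain_left_residues m t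
      = (?A - ?I (delay_gain m t)) + ?I (gain_right m t)
        + (?I (gain_left m t) - 2 * pi * \<i> * gain_left_residues m t)"
    using delay_gain_line_split[OF m t d nz Y] by (simp add: complex_eq_iff)
  also have "cmod \<dots> \<le> 16 / Y + 24 / Y + 24 / Y"
    by (intro order.trans[OF norm_triangle_ineq] add_mono delay_gain_axis_to_line[OF m t d nz Y]
        gain_right_line_bound[OF m t d nz Y] gain_left_line_residues[OF m t d nz Y])
  finally show ?thesis by simp
qed

lemma cos_pos_sin_lt_one:
  fixes x :: real
  assumes "0 \<le> x" "x < pi / 2"
  shows "0 < cos x" "sin x < 1"
proof -
  show c: "0 < cos x" using assms pi_gt_zero by (intro cos_gt_zero_pi) linarith+
  hence "(sin x)^2 < 1" using sin_cos_squared_add[of x] by (smt (verit) zero_less_power)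
  thus "sin x < 1" by (smt (verit) one_le_power)
qed

lemma gain_left_numerator_poles:
  assumes m: "m \<noteq> 0"
  shows "gain_left_numerator m t (\<i> * of_real m) = cis (t * m) / (cis (t * m) - \<i>)"
    and "gain_left_numerator m t (- (\<i> * of_real m)) = cis (- (t * m)) / (cis (- (t * m)) + \<i>)"
proof -
  have mnz: "(of_real m :: complex) \<noteq> 0" using m by simp
  have "gain_left_numerator m t (\<i> * of_real m)
      = (of_real m * cis (t * m)) / (of_real m * (cis (t * m) - \<i>))"
    unfolding gain_left_numerator_def delay_char_def cis_conv_exp by (simp add: algebra_simps)
  thus "gain_left_numerator m t (\<i> * of_real m) = cis (t * m) / (cis (t * m) - \<i>)"
    using mnz by simp
  have "gain_left_numerator m t (- (\<i> * of_real m))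
      = (of_real m * cis (- (t * m))) / (of_real m * (cis (- (t * m)) + \<i>))"
    unfolding gain_left_numerator_def delay_char_def cis_conv_exp by (simp add: algebra_simps)
  thus "gain_left_numerator m t (- (\<i> * of_real m)) = cis (- (t * m)) / (cis (- (t * m)) + \<i>)"
    using mnz by simp
qed

lemma gain_left_residues_eq:
  fixes m t :: real
  assumes m: "m > 0" and t: "t \<ge> 0" and tm: "t * m < pi / 2"
  shows "gain_left_residues m t = of_real (cos (t * m) / (2 * m * (1 - sin (t * m))))"
proof -
  define c where "c = cos (t * m)"
  define s where "s = sin (t * m)"
  have "0 \<le> t * m" using t m by simp
  hence s1: "s < 1" unfolding s_def using tm by (rule cos_pos_sin_lt_one)
  define z where "z = cis (t * m)"
  define z' where "z' = cis (- (t * m))"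
  have zc: "z = of_real c + \<i> * of_real s" and zc': "z' = of_real c - \<i> * of_real s"
    unfolding z_def z'_def c_def s_def by (simp_all add: complex_eq_iff)
  have zz: "z * z' = 1" unfolding z_def z'_def by (simp add: cis_mult)
  have zi: "z - \<i> \<noteq> 0" and zi': "z' + \<i> \<noteq> 0"
    using s1 unfolding zc zc' by (auto simp: complex_eq_iff)
  have num: "z * (z' + \<i>) - z' * (z - \<i>) = 2 * \<i> * of_real c"
    unfolding zc zc' by (simp add: algebra_simps)
  have "(z - \<i>) * (z' + \<i>) = z * z' + \<i> * (z - z') + 1" by (simp add: algebra_simps)
  also have "\<dots> = 2 * (1 - of_real s)" unfolding zz by (simp add: zc zc' algebra_simps)
  finally have den: "(z - \<i>) * (z' + \<i>) = 2 * (1 - of_real s)" .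
  have "z / (z - \<i>) - z' / (z' + \<i>) = (z * (z' + \<i>) - z' * (z - \<i>)) / ((z - \<i>) * (z' + \<i>))"
    using zi zi' by (simp add: field_simps)
  hence "gain_left_residues m t = (2 * \<i> * of_real c) / (2 * (1 - of_real s)) / (2 * \<i> * of_real m)"
    unfolding gain_left_residues_def gain_left_numerator_poles[OF less_imp_neq[OF m, symmetric]]
      z_def[symmetric] z'_def[symmetric] num den by simp
  also have "\<dots> = of_real (c / (2 * m * (1 - s)))"
    using s1 m by (simp add: field_simps)
  finally show ?thesis unfolding c_def s_def .
qed

lemma delay_gain_imag_axis:
  "delay_gain m t (Complex 0 y) = of_real (1 / (cmod (delay_char m t (\<i> * of_real y)))^2)"
proof -
  define A where "A = delay_char m t (\<i> * of_real y)"
  have c: "Complex 0 y = \<i> * of_real y" by (simp add: complex_eq_iff)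
  have "delay_char m t (- (\<i> * of_real y)) = cnj A"
    unfolding A_def delay_char_def by (simp add: exp_cnj)
  hence "delay_gain m t (Complex 0 y) = 1 / (A * cnj A)" unfolding delay_gain_def c A_def by simp
  also have "\<dots> = 1 / of_real ((cmod A)^2)" by (simp only: complex_norm_square)
  finally show ?thesis unfolding A_def by simp
qed

lemma has_integral_UNIV_of_truncations:
  fixes \<phi> :: "real \<Rightarrow> real"
  assumes cont: "continuous_on UNIV \<phi>" and nonneg: "\<And>y. 0 \<le> \<phi> y"
    and est: "\<And>Y. Y \<ge> Y0 \<Longrightarrow> \<bar>integral {-Y..Y} \<phi> - L\<bar> \<le> C / Y"
  shows "(\<phi> has_integral L) UNIV"
proof -
  define J where "J = (\<lambda>Y::real. integral {-Y..Y} \<phi>)"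
  have hasJ: "\<And>Y. (\<phi> has_integral J Y) {-Y..Y}"
    unfolding J_def by (rule integrable_integral, rule integrable_continuous_real,
        rule continuous_on_subset[OF cont]) auto
  have lim: "(\<lambda>k::nat. J (real k)) \<longlonglongrightarrow> L"
  proof -
    have "(\<lambda>k::nat. J (real k) - L) \<longlonglongrightarrow> 0"
    proof (rule Lim_null_comparison)
      obtain N :: nat where N: "real N \<ge> Y0" using real_arch_simple by blast
      show "\<forall>\<^sub>F k in sequentially. norm (J (real k) - L) \<le> C * (1 / real k)"
        unfolding eventually_sequentially J_def by (rule exI[of _ N]) (use est N in auto)
      show "(\<lambda>k. C * (1 / real k)) \<longlonglongrightarrow> 0"
        using tendsto_mult_right_zero[OF lim_inverse_n', of C] by simp
    qed
    thus ?thesis by (simp add: LIM_zero_iff)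
  qed
  define f where "f = (\<lambda>(k::nat) x. if x \<in> {- real k..real k} then \<phi> x else 0)"
  have fi: "\<And>k. (f k has_integral J (real k)) UNIV"
    unfolding f_def using hasJ by (simp only: has_integral_restrict_UNIV)
  have fmono: "\<And>k x. f k x \<le> f (Suc k) x"
    unfolding f_def using nonneg by auto
  have flim: "(\<lambda>k. f k x) \<longlonglongrightarrow> \<phi> x" for x
  proof -
    obtain N :: nat where N: "real N \<ge> \<bar>x\<bar>" using real_arch_simple by blast
    have "\<forall>\<^sub>F k in sequentially. f k x = \<phi> x"
      unfolding eventually_sequentially f_def by (rule exI[of _ N]) (use N in auto)
    thus ?thesis by (rule tendsto_eventually)
  qed
  show ?thesis
    by (rule has_integral_monotone_convergence_increasing[OF fi _ _ lim]) (use fmono flim in auto)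
qed

theorem delay_gain_integral:
  fixes m t :: real
  assumes m: "m > 0" and t: "t \<ge> 0" and tm: "t * m < pi / 2"
  shows "((\<lambda>y. 1 / (cmod (delay_char m t (\<i> * of_real y)))^2) has_integral
           pi * cos (t * m) / (m * (1 - sin (t * m)))) UNIV"
proof -
  define \<phi> where "\<phi> = (\<lambda>y::real. 1 / (cmod (delay_char m t (\<i> * of_real y)))^2)"
  define L where "L = pi * cos (t * m) / (m * (1 - sin (t * m)))"
  obtain \<delta> where d0: "\<delta> > 0" and d1: "t * m * exp (t * \<delta>) < pi / 2"
      and d2: "\<delta> < m * cos (t * m * exp (t * \<delta>))"
    using delay_char_margin_exists[OF m t tm] by blast
  have nz: "\<And>u. Re u \<ge> - \<delta> \<Longrightarrow> delay_char m t u \<noteq> 0"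
    using delay_char_nonzero[OF m t d1 d2 d0] by blast
  have cont: "continuous_on UNIV \<phi>"
  proof -
    have "continuous_on UNIV (\<lambda>y::real. delay_char m t (\<i> * of_real y))"
      unfolding delay_char_def by (intro continuous_intros)
    moreover have "\<And>y. delay_char m t (\<i> * of_real y) \<noteq> 0" using nz d0 by simp
    ultimately show ?thesis unfolding \<phi>_def by (intro continuous_intros) auto
  qed
  have residues: "2 * pi * \<i> * gain_left_residues m t = \<i> * of_real L"
  proof -
    have "0 \<le> t * m" using t m by simp
    hence "sin (t * m) < 1" using tm by (rule cos_pos_sin_lt_one)
    thus ?thesis unfolding gain_left_residues_eq[OF m t tm] L_def using m by (simp add: field_simps)
  qed
  have est: "\<bar>integral {-Y..Y} \<phi> - L\<bar> \<le> 64 / Y"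
    if Y: "Y \<ge> 2 * (m * exp (t * \<delta>)) + \<delta> + m + 1" for Y
  proof -
    have Yp: "Y > 0" using Y m d0 by (smt (verit) exp_gt_zero mult_pos_pos)
    have "(\<phi> has_integral integral {-Y..Y} \<phi>) {-Y..Y}"
      by (rule integrable_integral, rule integrable_continuous_real, rule continuous_on_subset[OF cont]) auto
    hence "(delay_gain m t has_contour_integral (\<i> * of_real (integral {-Y..Y} \<phi>)))
             (linepath (Complex 0 (-Y)) (Complex 0 Y))"
      by (rule has_contour_integral_imag_segment[OF _ Yp]) (simp add: delay_gain_imag_axis \<phi>_def)
    hence "contour_integral (linepath (Complex 0 (-Y)) (Complex 0 Y)) (delay_gain m t)
             - 2 * pi * \<i> * gain_left_residues m t = \<i> * of_real (integral {-Y..Y} \<phi> - L)"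
      unfolding residues by (simp add: contour_integral_unique algebra_simps)
    with delay_gain_axis_estimate[OF m t d0 nz Y]
    have "cmod (\<i> * of_real (integral {-Y..Y} \<phi> - L)) \<le> 64 / Y" by simp
    thus ?thesis by (simp only: norm_mult norm_ii norm_of_real) simp
  qed
  have "(\<phi> has_integral L) UNIV"
    by (rule has_integral_UNIV_of_truncations[OF cont _ est]) (simp add: \<phi>_def)
  thus ?thesis unfolding \<phi>_def L_def .
qed

section \<open>Spectral calculus for symmetric matrices\<close>

lemma symmetric_matrix_inner:
  fixes A :: "real^'n^'n"
  assumes "transpose A = A"
  shows "x \<bullet> (A *v y) = (A *v x) \<bullet> y"
proof -
  have "x \<bullet> (A *v y) = (x v* A) \<bullet> y" by (simp add: dot_lmul_matrix)
  also have "x v* A = transpose A *v x" by simp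
  finally show ?thesis using assms by simp
qed

lemma rayleigh_maximiser_eigenvector:
  fixes A :: "real^'n^'n" and S :: "(real^'n) set"
  assumes sym: "transpose A = A"
    and sc: "\<And>x r. x \<in> S \<Longrightarrow> r *\<^sub>R x \<in> S"
    and df: "\<And>x y. x \<in> S \<Longrightarrow> y \<in> S \<Longrightarrow> x - y \<in> S"
    and inv: "\<And>x. x \<in> S \<Longrightarrow> A *v x \<in> S"
    and vS: "v \<in> S" and vv: "v \<bullet> v = 1"
    and max: "\<And>x. x \<in> S \<Longrightarrow> x \<bullet> (A *v x) \<le> (v \<bullet> (A *v v)) * (x \<bullet> x)"
  shows "A *v v = (v \<bullet> (A *v v)) *\<^sub>R v"
proof -
  define l where "l = v \<bullet> (A *v v)"
  define Q where "Q = (\<lambda>x. l * (x \<bullet> x) - x \<bullet> (A *v x))"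
  have Qnn: "\<And>x. x \<in> S \<Longrightarrow> Q x \<ge> 0" using max unfolding Q_def l_def by fastforce
  define w where "w = A *v v - l *\<^sub>R v"
  have wS: "w \<in> S" unfolding w_def using inv vS sc df by blast
  have key: "Q (v - r *\<^sub>R w) = 2 * r * (w \<bullet> w) + r^2 * Q w" for r
  proof -
    have e1: "v \<bullet> (A *v w) = w \<bullet> (A *v v)"
      using symmetric_matrix_inner[OF sym, of v w] by (simp add: inner_commute)
    have e2: "w \<bullet> (A *v v) = w \<bullet> w + l * (w \<bullet> v)" unfolding w_def
      by (simp add: inner_diff_left inner_diff_right algebra_simps)
    show ?thesis unfolding Q_def
      by (simp add: e2 inner_diff_left inner_diff_right matrix_vector_mult_scaleR e1 vv
          algebra_simps inner_commute[of v w] power2_eq_square flip: l_def)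
  qed
  have "w \<bullet> w = 0"
  proof (rule ccontr)
    assume "w \<bullet> w \<noteq> 0"
    hence pos: "w \<bullet> w > 0" by (simp add: order_le_neq_trans[OF inner_ge_zero])
    have Qw: "Q w \<ge> 0" using Qnn wS by blast
    define t where "t = (w \<bullet> w) / (Q w + 1)"
    have tp: "t > 0" unfolding t_def using pos Qw by simp
    have "t * Q w = (w \<bullet> w) * (Q w / (Q w + 1))" unfolding t_def by simp
    also have "\<dots> < (w \<bullet> w) * 1" using pos Qw by (intro mult_strict_left_mono) auto
    finally have tq: "t * Q w < w \<bullet> w" by simp
    have "v - (- t) *\<^sub>R w \<in> S" using vS wS sc df by blast
    hence "2 * (- t) * (w \<bullet> w) + (- t)^2 * Q w \<ge> 0" using Qnn key by metis
    moreover have "2 * (- t) * (w \<bullet> w) + (- t)^2 * Q w = t * (t * Q w - 2 * (w \<bullet> w))"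
      by (simp add: algebra_simps power2_eq_square)
    moreover have "t * (t * Q w - 2 * (w \<bullet> w)) < 0" using tp tq pos by (intro mult_pos_neg; linarith)
    ultimately show False by linarith
  qed
  thus ?thesis unfolding w_def l_def by simp
qed

lemma invariant_subspace_eigenvector:
  fixes A :: "real^'n^'n" and S :: "(real^'n) set"
  assumes sym: "transpose A = A" and cl: "closed S"
    and sc: "\<And>x r. x \<in> S \<Longrightarrow> r *\<^sub>R x \<in> S"
    and df: "\<And>x y. x \<in> S \<Longrightarrow> y \<in> S \<Longrightarrow> x - y \<in> S"
    and inv: "\<And>x. x \<in> S \<Longrightarrow> A *v x \<in> S"
    and x0: "x0 \<in> S" "x0 \<noteq> 0"
  shows "\<exists>v\<in>S. norm v = 1 \<and> A *v v = (v \<bullet> (A *v v)) *\<^sub>R v"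
proof -
  define T where "T = sphere 0 1 \<inter> S"
  have cT: "compact T" unfolding T_def by (rule compact_Int_closed[OF compact_sphere cl])
  have "(1 / norm x0) *\<^sub>R x0 \<in> T" using x0 sc by (auto simp: T_def)
  hence neT: "T \<noteq> {}" by blast
  define f where "f = (\<lambda>x::real^'n. x \<bullet> (A *v x))"
  have cf: "continuous_on T f" unfolding f_def by (intro continuous_intros)
  obtain v where vT: "v \<in> T" and vmax: "\<And>y. y \<in> T \<Longrightarrow> f y \<le> f v"
    using continuous_attains_sup[OF cT neT cf] by blast
  have vS: "v \<in> S" and nv: "norm v = 1" using vT by (auto simp: T_def)
  have "f x \<le> f v * (x \<bullet> x)" if xS: "x \<in> S" for x
  proof (cases "x = 0")
    case False
    define y where "y = (1 / norm x) *\<^sub>R x"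
    have "y \<in> T" using False xS sc by (auto simp: T_def y_def)
    hence "f y \<le> f v" by (rule vmax)
    moreover have "f y = f x / (norm x)^2"
      unfolding f_def y_def by (simp add: matrix_vector_mult_scaleR power2_eq_square)
    ultimately have "f x \<le> f v * (norm x)^2" using False by (simp add: divide_le_eq)
    thus ?thesis by (simp add: dot_square_norm)
  qed (simp add: f_def)
  hence "A *v v = (v \<bullet> (A *v v)) *\<^sub>R v"
    by (intro rayleigh_maximiser_eigenvector[OF sym sc df inv vS])
       (simp_all add: nv dot_square_norm f_def)
  thus ?thesis using vS nv by blast
qed

lemma orthonormal_eigenvectors_exist:
  fixes A :: "real^'n^'n"
  assumes sym: "transpose A = A"
  shows "k \<le> CARD('n) \<Longrightarrow> \<exists>F. finite F \<and> card F = k \<and>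
           (\<forall>f\<in>F. norm f = 1 \<and> A *v f = (f \<bullet> (A *v f)) *\<^sub>R f) \<and>
           (\<forall>f\<in>F. \<forall>g\<in>F. f \<noteq> g \<longrightarrow> f \<bullet> g = 0)"
proof (induction k)
  case 0
  show ?case by (rule exI[of _ "{}"]) auto
next
  case (Suc k)
  then obtain F where fF: "finite F" and cF: "card F = k"
    and eF: "\<forall>f\<in>F. norm f = 1 \<and> A *v f = (f \<bullet> (A *v f)) *\<^sub>R f"
    and oF: "\<forall>f\<in>F. \<forall>g\<in>F. f \<noteq> g \<longrightarrow> f \<bullet> g = 0" by auto
  have kl: "k < CARD('n)" using Suc.prems by simp
  define S where "S = {x. \<forall>f\<in>F. f \<bullet> x = 0}"
  have clS: "closed S"
  proof -
    have "S = (\<Inter>f\<in>F. {x. f \<bullet> x = 0})" by (auto simp: S_def)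
    thus ?thesis by (auto intro!: closed_INT closed_hyperplane)
  qed
  have scS: "\<And>x r. x \<in> S \<Longrightarrow> r *\<^sub>R x \<in> S" by (auto simp: S_def)
  have dfS: "\<And>x y. x \<in> S \<Longrightarrow> y \<in> S \<Longrightarrow> x - y \<in> S" by (auto simp: S_def inner_diff_right)
  have invS: "\<And>x. x \<in> S \<Longrightarrow> A *v x \<in> S"
  proof -
    fix x assume xS: "x \<in> S"
    { fix f assume fF': "f \<in> F"
      have "f \<bullet> (A *v x) = (A *v f) \<bullet> x" by (rule symmetric_matrix_inner[OF sym])
      also have "\<dots> = (f \<bullet> (A *v f)) * (f \<bullet> x)" using eF fF' by (metis inner_scaleR_left)
      also have "\<dots> = 0" using xS fF' by (simp add: S_def)
      finally have "f \<bullet> (A *v x) = 0" . }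
    thus "A *v x \<in> S" by (simp add: S_def)
  qed
  have "dim F \<le> card F" using fF by (intro dim_le_card) (auto intro: span_base)
  hence "dim F < DIM(real^'n)" using cF kl by simp
  then obtain x0 where x0: "x0 \<noteq> 0" "\<And>y. y \<in> span F \<Longrightarrow> orthogonal x0 y"
    by (rule orthogonal_to_subspace_exists) blast
  have x0S: "x0 \<in> S" using x0(2) by (auto simp: S_def orthogonal_def inner_commute intro: span_base)
  obtain v where vS: "v \<in> S" and nv: "norm v = 1" and ev: "A *v v = (v \<bullet> (A *v v)) *\<^sub>R v"
    using invariant_subspace_eigenvector[OF sym clS scS dfS invS x0S x0(1)] by blast
  have vF: "v \<notin> F"
  proof
    assume "v \<in> F"
    hence "v \<bullet> v = 0" using vS by (simp add: S_def)
    thus False using nv by simp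
  qed
  show ?case
  proof (rule exI[of _ "insert v F"], intro conjI)
    show "finite (insert v F)" using fF by simp
    show "card (insert v F) = Suc k" using fF vF cF by simp
    show "\<forall>f\<in>insert v F. norm f = 1 \<and> A *v f = (f \<bullet> (A *v f)) *\<^sub>R f" using eF nv ev by auto
    show "\<forall>f\<in>insert v F. \<forall>g\<in>insert v F. f \<noteq> g \<longrightarrow> f \<bullet> g = 0"
      using oF vS by (auto simp: S_def inner_commute)
  qed
qed

definition orthonormal :: "('n::finite \<Rightarrow> real^'n) \<Rightarrow> bool" where
  "orthonormal u \<longleftrightarrow> (\<forall>i j. u i \<bullet> u j = (if i = j then 1 else 0))"

theorem symmetric_orthonormal_eigenbasis:
  fixes A :: "real^'n^'n"
  assumes sym: "transpose A = A"
  obtains u :: "'n \<Rightarrow> real^'n" and \<mu> :: "'n \<Rightarrow> real"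
  where "orthonormal u" "\<And>i. A *v u i = \<mu> i *\<^sub>R u i"
proof -
  obtain F where fF: "finite F" and cF: "card F = CARD('n)"
    and eF: "\<forall>f\<in>F. norm f = 1 \<and> A *v f = (f \<bullet> (A *v f)) *\<^sub>R f"
    and oF: "\<forall>f\<in>F. \<forall>g\<in>F. f \<noteq> g \<longrightarrow> f \<bullet> g = 0"
    using orthonormal_eigenvectors_exist[OF sym, of "CARD('n)"] by auto
  obtain h where h: "bij_betw h (UNIV :: 'n set) F"
    using finite_same_card_bij[of "UNIV :: 'n set" F] fF cF by auto
  have hF: "\<And>i. h i \<in> F" using h by (auto simp: bij_betw_def)
  have hinj: "\<And>i j. h i = h j \<Longrightarrow> i = j" using h by (auto simp: bij_betw_def inj_def)
  show ?thesis
  proof (rule that[of h "\<lambda>i. h i \<bullet> (A *v h i)"])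
    have "h i \<bullet> h j = (if i = j then 1 else 0)" for i j
    proof (cases "i = j")
      case True
      have "norm (h i) = 1" using eF hF by auto
      thus ?thesis using True norm_eq_1 by auto
    next
      case False
      hence "h i \<noteq> h j" using hinj by blast
      thus ?thesis using oF hF False by auto
    qed
    thus "orthonormal h" unfolding orthonormal_def by blast
  next
    fix i show "A *v h i = (h i \<bullet> (A *v h i)) *\<^sub>R h i" using eF hF by auto
  qed
qed

(* Polymorphic in the coefficient field, so that the complex resolvent (sI + e^{-\<tau>s} L)^-1
   is also a spectral_matrix of the eigenbasis of L. *)
definition spectral_matrix :: "('n::finite \<Rightarrow> real^'n) \<Rightarrow> ('n \<Rightarrow> 'a::real_field) \<Rightarrow> 'a^'n^'n" where
  "spectral_matrix u g = (\<chi> r c. \<Sum>k\<in>UNIV. g k * of_real (u k $ r * u k $ c))"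

lemma orthonormal_inner: "orthonormal u \<Longrightarrow> (\<Sum>r\<in>UNIV. u i $ r * u j $ r) = (if i = j then 1 else 0)"
  unfolding orthonormal_def by (metis inner_vec_def inner_real_def)

lemma orthonormal_complete:
  fixes u :: "'n::finite \<Rightarrow> real^'n"
  assumes on: "orthonormal u"
  shows "(\<Sum>k\<in>UNIV. u k $ r * u k $ s) = (if r = s then 1 else 0)"
proof -
  define U :: "real^'n^'n" where "U = (\<chi> r k. u k $ r)"
  have "transpose U ** U = mat 1"
    unfolding U_def by (simp add: matrix_matrix_mult_def transpose_def mat_def vec_eq_iff orthonormal_inner[OF on])
  hence "U ** transpose U = mat 1" by (simp add: matrix_left_right_inverse)
  hence "(U ** transpose U) $ r $ s = mat 1 $ r $ s" by simp
  thus ?thesis unfolding U_def by (simp add: matrix_matrix_mult_def transpose_def mat_def)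
qed

lemma spectral_matrix_mult:
  fixes u :: "'n::finite \<Rightarrow> real^'n" and g h :: "'n \<Rightarrow> 'a::real_field"
  assumes on: "orthonormal u"
  shows "spectral_matrix u g ** spectral_matrix u h = spectral_matrix u (\<lambda>k. g k * h k)"
proof -
  have "(\<Sum>j\<in>UNIV. (\<Sum>k\<in>UNIV. g k * of_real (u k $ r * u k $ j)) * (\<Sum>l\<in>UNIV. h l * of_real (u l $ j * u l $ c)))
      = (\<Sum>k\<in>UNIV. g k * h k * of_real (u k $ r * u k $ c))" for r c
  proof -
    have "(\<Sum>j\<in>UNIV. (\<Sum>k\<in>UNIV. g k * of_real (u k $ r * u k $ j)) * (\<Sum>l\<in>UNIV. h l * of_real (u l $ j * u l $ c)))
        = (\<Sum>j\<in>UNIV. \<Sum>k\<in>UNIV. \<Sum>l\<in>UNIV. (g k * of_real (u k $ r * u k $ j)) * (h l * of_real (u l $ j * u l $ c)))"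
      by (simp only: sum_product)
    also have "\<dots> = (\<Sum>k\<in>UNIV. \<Sum>l\<in>UNIV. \<Sum>j\<in>UNIV. (g k * of_real (u k $ r * u k $ j)) * (h l * of_real (u l $ j * u l $ c)))"
      by (subst sum.swap, rule sum.cong, simp, subst sum.swap, simp)
    also have "\<dots> = (\<Sum>k\<in>UNIV. \<Sum>l\<in>UNIV. (g k * h l * of_real (u k $ r * u l $ c)) * of_real (\<Sum>j\<in>UNIV. u k $ j * u l $ j))"
      by (simp add: of_real_sum sum_distrib_left mult_ac)
    also have "\<dots> = (\<Sum>k\<in>UNIV. g k * h k * of_real (u k $ r * u k $ c))"
      by (simp add: orthonormal_inner[OF on] if_distrib sum.delta cong: if_cong)
    finally show ?thesis .
  qed
  thus ?thesis unfolding spectral_matrix_def matrix_matrix_mult_def by (simp add: vec_eq_iff)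
qed

lemma spectral_matrix_one:
  fixes u :: "'n::finite \<Rightarrow> real^'n"
  assumes on: "orthonormal u"
  shows "spectral_matrix u (\<lambda>_. 1 :: 'a::real_field) = mat 1"
proof -
  have "(\<Sum>k\<in>UNIV. (1::'a) * of_real (u k $ r * u k $ c)) = (if r = c then 1 else 0)" for r c
  proof -
    have "(\<Sum>k\<in>UNIV. (1::'a) * of_real (u k $ r * u k $ c)) = of_real (\<Sum>k\<in>UNIV. u k $ r * u k $ c)"
      by (simp only: of_real_sum mult_1)
    thus ?thesis by (simp add: orthonormal_complete[OF on])
  qed
  thus ?thesis unfolding spectral_matrix_def mat_def by (simp add: vec_eq_iff)
qed

lemma spectral_matrix_transpose:
  fixes u :: "'n::finite \<Rightarrow> real^'n"
  shows "transpose (spectral_matrix u g) = spectral_matrix u g"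
  unfolding spectral_matrix_def transpose_def by (simp add: vec_eq_iff mult.commute)

lemma spectral_matrix_diff:
  fixes u :: "'n::finite \<Rightarrow> real^'n"
  shows "spectral_matrix u g - spectral_matrix u h = spectral_matrix u (\<lambda>k. g k - h k)"
  unfolding spectral_matrix_def by (simp add: vec_eq_iff sum_subtractf[symmetric] algebra_simps)

lemma spectral_matrix_scaleR:
  fixes u :: "'n::finite \<Rightarrow> real^'n" and g :: "'n \<Rightarrow> real"
  shows "c *\<^sub>R spectral_matrix u g = spectral_matrix u (\<lambda>k. c * g k)"
  unfolding spectral_matrix_def by (simp add: vec_eq_iff sum_distrib_left algebra_simps)

lemma spectral_matrix_eigenvector:
  fixes u :: "'n::finite \<Rightarrow> real^'n" and g :: "'n \<Rightarrow> real"
  assumes on: "orthonormal u"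
  shows "spectral_matrix u g *v u l = g l *\<^sub>R u l"
proof -
  have "(\<Sum>c\<in>UNIV. (\<Sum>k\<in>UNIV. g k * (u k $ r * u k $ c)) * u l $ c) = g l * u l $ r" for r
  proof -
    have "(\<Sum>c\<in>UNIV. (\<Sum>k\<in>UNIV. g k * (u k $ r * u k $ c)) * u l $ c)
        = (\<Sum>k\<in>UNIV. g k * u k $ r * (\<Sum>c\<in>UNIV. u k $ c * u l $ c))"
      by (simp add: sum_distrib_left sum_distrib_right mult_ac) (rule sum.swap)
    also have "\<dots> = g l * u l $ r" by (simp add: orthonormal_inner[OF on] if_distrib sum.delta cong: if_cong)
    finally show ?thesis .
  qed
  thus ?thesis unfolding spectral_matrix_def matrix_vector_mult_def by (simp add: vec_eq_iff)
qed

lemma matrix_entry_expand: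
  fixes u :: "'n::finite \<Rightarrow> real^'n" and X :: "real^'n^'n"
  assumes on: "orthonormal u"
  shows "X $ r $ c = (\<Sum>k\<in>UNIV. (X *v u k) $ r * u k $ c)"
proof -
  have "(\<Sum>k\<in>UNIV. (X *v u k) $ r * u k $ c) = (\<Sum>k\<in>UNIV. \<Sum>j\<in>UNIV. X $ r $ j * (u k $ j * u k $ c))"
    by (simp add: matrix_vector_mult_def sum_distrib_right mult.assoc)
  also have "\<dots> = (\<Sum>j\<in>UNIV. X $ r $ j * (\<Sum>k\<in>UNIV. u k $ j * u k $ c))"
    by (subst sum.swap) (simp add: sum_distrib_left)
  also have "\<dots> = X $ r $ c" by (simp add: orthonormal_complete[OF on] if_distrib sum.delta cong: if_cong)
  finally show ?thesis by simp
qed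

lemma matrix_eq_on_orthonormal:
  fixes u :: "'n::finite \<Rightarrow> real^'n" and X Y :: "real^'n^'n"
  assumes on: "orthonormal u" and eq: "\<And>k. X *v u k = Y *v u k"
  shows "X = Y"
  by (simp add: vec_eq_iff matrix_entry_expand[OF on, of X] matrix_entry_expand[OF on, of Y] eq)

lemma spectral_matrix_eq:
  fixes u :: "'n::finite \<Rightarrow> real^'n" and X :: "real^'n^'n"
  assumes on: "orthonormal u" and eq: "\<And>k. X *v u k = g k *\<^sub>R u k"
  shows "X = spectral_matrix u g"
  by (rule matrix_eq_on_orthonormal[OF on]) (simp add: eq spectral_matrix_eigenvector[OF on])

lemma mpow_spectral_matrix:
  fixes u :: "'n::finite \<Rightarrow> real^'n"
  assumes on: "orthonormal u"
  shows "mpow (spectral_matrix u g) n = spectral_matrix u (\<lambda>k. g k ^ n)"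
proof (induction n)
  case 0
  show ?case by (simp add: mpow_def spectral_matrix_one[OF on])
next
  case (Suc n)
  have "mpow (spectral_matrix u g) (Suc n) = spectral_matrix u g ** mpow (spectral_matrix u g) n" by (simp add: mpow_def)
  also have "\<dots> = spectral_matrix u (\<lambda>k. g k ^ Suc n)" unfolding Suc spectral_matrix_mult[OF on] by simp
  finally show ?case .
qed

lemma matrix_inv_eqI:
  fixes A B :: "'a::comm_ring_1^'n::finite^'n"
  assumes "A ** B = mat 1" "B ** A = mat 1"
  shows "matrix_inv A = B"
proof -
  have ex: "\<exists>B'. A ** B' = mat 1 \<and> B' ** A = mat 1" using assms by blast
  define C where "C = matrix_inv A"
  have C: "A ** C = mat 1 \<and> C ** A = mat 1" unfolding C_def matrix_inv_def by (rule someI_ex[OF ex])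
  have "C = C ** (A ** B)" using assms by (simp add: matrix_mul_rid)
  also have "\<dots> = (C ** A) ** B" by (simp add: matrix_mul_assoc)
  also have "\<dots> = B" using C by (simp add: matrix_mul_lid)
  finally show ?thesis unfolding C_def .
qed

lemma matrix_inv_spectral_matrix:
  fixes u :: "'n::finite \<Rightarrow> real^'n" and g :: "'n \<Rightarrow> 'a::real_field"
  assumes on: "orthonormal u" and nz: "\<And>k. g k \<noteq> 0"
  shows "matrix_inv (spectral_matrix u g) = spectral_matrix u (\<lambda>k. inverse (g k))"
  by (rule matrix_inv_eqI) (simp_all add: spectral_matrix_mult[OF on] nz spectral_matrix_one[OF on])

lemma cmat_spectral_matrix:
  fixes u :: "'n::finite \<Rightarrow> real^'n" and g :: "'n \<Rightarrow> real"
  shows "cmat (spectral_matrix u g) = spectral_matrix u (\<lambda>k. complex_of_real (g k))"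
  unfolding cmat_def spectral_matrix_def by (simp add: vec_eq_iff)

definition rank_one :: "('n::finite \<Rightarrow> real^'n) \<Rightarrow> 'n \<Rightarrow> real^'n^'n" where
  "rank_one u k = (\<chi> r c. u k $ r * u k $ c)"

lemma spectral_matrix_rank_one_sum:
  fixes u :: "'n::finite \<Rightarrow> real^'n" and g :: "'n \<Rightarrow> real"
  shows "spectral_matrix u g = (\<Sum>k\<in>UNIV. g k *\<^sub>R rank_one u k)"
  unfolding spectral_matrix_def rank_one_def by (simp add: vec_eq_iff sum_component)

lemma sums_spectral_matrix:
  fixes u :: "'n::finite \<Rightarrow> real^'n" and g :: "'n \<Rightarrow> real"
  assumes on: "orthonormal u" and s: "\<And>x. (\<lambda>n. c n * x ^ (p n)) sums f x"
  shows "(\<lambda>n. c n *\<^sub>R mpow (spectral_matrix u g) (p n)) sums spectral_matrix u (\<lambda>k. f (g k))"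
proof -
  have "(\<lambda>n. \<Sum>k\<in>UNIV. (c n * g k ^ p n) *\<^sub>R rank_one u k) sums (\<Sum>k\<in>UNIV. f (g k) *\<^sub>R rank_one u k)"
    by (intro sums_sum sums_scaleR_left s)
  moreover have "\<And>n. c n *\<^sub>R mpow (spectral_matrix u g) (p n) = (\<Sum>k\<in>UNIV. (c n * g k ^ p n) *\<^sub>R rank_one u k)"
    by (simp only: mpow_spectral_matrix[OF on] spectral_matrix_scaleR) (simp add: spectral_matrix_rank_one_sum)
  ultimately show ?thesis by (simp add: spectral_matrix_rank_one_sum)
qed

lemma mat_cos_spectral_matrix:
  fixes u :: "'n::finite \<Rightarrow> real^'n" and g :: "'n \<Rightarrow> real"
  assumes on: "orthonormal u"
  shows "mat_cos (spectral_matrix u g) = spectral_matrix u (\<lambda>k. cos (g k))"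
  unfolding mat_cos_def
  by (rule sums_unique[symmetric], rule sums_spectral_matrix[OF on, of "\<lambda>n. (-1)^n / fact (2*n)" "\<lambda>n. 2*n" cos])
     (rule cos_paired)

lemma mat_sin_spectral_matrix:
  fixes u :: "'n::finite \<Rightarrow> real^'n" and g :: "'n \<Rightarrow> real"
  assumes on: "orthonormal u"
  shows "mat_sin (spectral_matrix u g) = spectral_matrix u (\<lambda>k. sin (g k))"
  unfolding mat_sin_def
  by (rule sums_unique[symmetric], rule sums_spectral_matrix[OF on, of "\<lambda>n. (-1)^n / fact (2*n+1)" "\<lambda>n. 2*n+1" sin])
     (rule sin_paired)

lemma penrose_conditions_unique:
  fixes A :: "real^'m::finite^'n::finite" and X Y :: "real^'n^'m"
  assumes x1: "A ** X ** A = A" and x2: "X ** A ** X = X" and x3: "transpose (A ** X) = A ** X"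
    and x4: "transpose (X ** A) = X ** A"
    and y1: "A ** Y ** A = A" and y2: "Y ** A ** Y = Y" and y3: "transpose (A ** Y) = A ** Y"
    and y4: "transpose (Y ** A) = Y ** A"
  shows "X = Y"
proof -
  have tA: "transpose A = transpose A ** (A ** Y)"
  proof -
    have "transpose A = transpose ((A ** Y) ** A)" using y1 by simp
    also have "\<dots> = transpose A ** transpose (A ** Y)" by (simp add: matrix_transpose_mul)
    finally show ?thesis using y3 by simp
  qed
  have "X = X ** (A ** X)" using x2 by (simp only: matrix_mul_assoc)
  also have "\<dots> = X ** transpose (A ** X)" using x3 by simp
  also have "\<dots> = X ** (transpose X ** transpose A)" by (simp add: matrix_transpose_mul)
  also have "\<dots> = X ** (transpose X ** (transpose A ** (A ** Y)))" using tA by simp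
  also have "\<dots> = (X ** transpose (A ** X)) ** (A ** Y)" by (simp only: matrix_transpose_mul matrix_mul_assoc)
  also have "\<dots> = (X ** (A ** X)) ** (A ** Y)" using x3 by simp
  also have "\<dots> = X ** (A ** Y)" using x2 by (simp only: matrix_mul_assoc)
  finally have X: "X = X ** (A ** Y)" .
  have tA': "transpose A = (X ** A) ** transpose A"
  proof -
    have "transpose A = transpose (A ** (X ** A))" using x1 by (simp only: matrix_mul_assoc)
    also have "\<dots> = transpose (X ** A) ** transpose A" by (simp add: matrix_transpose_mul)
    finally show ?thesis using x4 by simp
  qed
  have "Y = (Y ** A) ** Y" using y2 by simp
  also have "\<dots> = transpose (Y ** A) ** Y" using y4 by simp
  also have "\<dots> = (transpose A ** transpose Y) ** Y" by (simp add: matrix_transpose_mul)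
  also have "\<dots> = (((X ** A) ** transpose A) ** transpose Y) ** Y" using tA' by simp
  also have "\<dots> = (X ** A) ** (transpose (Y ** A) ** Y)" by (simp only: matrix_transpose_mul matrix_mul_assoc)
  also have "\<dots> = (X ** A) ** ((Y ** A) ** Y)" using y4 by simp
  also have "\<dots> = X ** (A ** Y)" using y2 by (simp only: matrix_mul_assoc)
  finally have Y: "Y = X ** (A ** Y)" .
  show ?thesis using X Y by simp
qed

lemma pinv_eqI:
  fixes A :: "real^'m::finite^'n::finite" and X :: "real^'n^'m"
  assumes "A ** X ** A = A" "X ** A ** X = X" "transpose (A ** X) = A ** X" "transpose (X ** A) = X ** A"
  shows "pinv A = X"
  unfolding pinv_def
proof (rule the_equality)
  show "A ** X ** A = A \<and> X ** A ** X = X \<and> transpose (A ** X) = A ** X \<and> transpose (X ** A) = X ** A"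
    using assms by blast
  fix Y assume "A ** Y ** A = A \<and> Y ** A ** Y = Y \<and> transpose (A ** Y) = A ** Y \<and> transpose (Y ** A) = Y ** A"
  thus "Y = X" using penrose_conditions_unique[OF assms, of Y] by simp
qed

lemma pinv_spectral_matrix:
  fixes u :: "'n::finite \<Rightarrow> real^'n" and g :: "'n \<Rightarrow> real"
  assumes on: "orthonormal u"
  shows "pinv (spectral_matrix u g) = spectral_matrix u (\<lambda>k. inverse (g k))"
proof (rule pinv_eqI)
  have a: "\<And>k. g k * inverse (g k) * g k = g k" by (case_tac "g k = 0") auto
  have b: "\<And>k. inverse (g k) * g k * inverse (g k) = inverse (g k)" by (case_tac "g k = 0") auto
  show "spectral_matrix u g ** spectral_matrix u (\<lambda>k. inverse (g k)) ** spectral_matrix u g = spectral_matrix u g"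
    by (simp add: spectral_matrix_mult[OF on] a)
  show "spectral_matrix u (\<lambda>k. inverse (g k)) ** spectral_matrix u g ** spectral_matrix u (\<lambda>k. inverse (g k)) = spectral_matrix u (\<lambda>k. inverse (g k))"
    by (simp add: spectral_matrix_mult[OF on] b)
  show "transpose (spectral_matrix u g ** spectral_matrix u (\<lambda>k. inverse (g k))) = spectral_matrix u g ** spectral_matrix u (\<lambda>k. inverse (g k))"
    by (simp add: spectral_matrix_mult[OF on] spectral_matrix_transpose)
  show "transpose (spectral_matrix u (\<lambda>k. inverse (g k)) ** spectral_matrix u g) = spectral_matrix u (\<lambda>k. inverse (g k)) ** spectral_matrix u g"
    by (simp add: spectral_matrix_mult[OF on] spectral_matrix_transpose)
qed

lemma vector_expand:
  fixes u :: "'n::finite \<Rightarrow> real^'n" and x :: "real^'n"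
  assumes on: "orthonormal u"
  shows "x $ r = (\<Sum>k\<in>UNIV. (u k \<bullet> x) * u k $ r)"
proof -
  have "(\<Sum>k\<in>UNIV. (u k \<bullet> x) * u k $ r) = (\<Sum>k\<in>UNIV. \<Sum>s\<in>UNIV. u k $ r * u k $ s * x $ s)"
    by (simp add: inner_vec_def sum_distrib_left sum_distrib_right mult_ac)
  also have "\<dots> = (\<Sum>s\<in>UNIV. (\<Sum>k\<in>UNIV. u k $ r * u k $ s) * x $ s)"
    by (subst sum.swap) (simp add: sum_distrib_right)
  also have "\<dots> = (\<Sum>s\<in>UNIV. (if r = s then x $ s else 0))"
    by (rule sum.cong) (simp_all add: orthonormal_complete[OF on])
  also have "\<dots> = x $ r" by simp
  finally show ?thesis by simp
qed

lemma orthonormal_unit: "orthonormal u \<Longrightarrow> u k \<bullet> u k = 1"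
  unfolding orthonormal_def by simp

lemma orthonormal_nonzero: "orthonormal u \<Longrightarrow> u k \<noteq> 0"
  using orthonormal_unit[of u k] by auto

lemma eigenvalue_inner:
  fixes u :: "'n::finite \<Rightarrow> real^'n"
  assumes on: "orthonormal u" and ev: "A *v u k = \<mu> k *\<^sub>R u k"
  shows "\<mu> k = u k \<bullet> (A *v u k)"
  using orthonormal_unit[OF on, of k] ev by simp

lemma eigenvalue_in_range:
  fixes u :: "'n::finite \<Rightarrow> real^'n" and A :: "real^'n^'n"
  assumes sym: "transpose A = A" and on: "orthonormal u" and ev: "\<And>k. A *v u k = \<mu> k *\<^sub>R u k"
    and l: "is_eigenvalue A l"
  shows "l \<in> range \<mu>"
proof -
  obtain x where x: "x \<noteq> 0" "A *v x = l *\<^sub>R x" using l by (auto simp: is_eigenvalue_def)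
  have "\<exists>k. u k \<bullet> x \<noteq> 0"
  proof (rule ccontr)
    assume "\<not> (\<exists>k. u k \<bullet> x \<noteq> 0)"
    hence "\<And>r. x $ r = 0" using vector_expand[OF on, of x] by simp
    hence "x = 0" by (simp add: vec_eq_iff)
    thus False using x by simp
  qed
  then obtain k where k: "u k \<bullet> x \<noteq> 0" by blast
  have "l * (u k \<bullet> x) = u k \<bullet> (A *v x)" using x by simp
  also have "\<dots> = (A *v u k) \<bullet> x" by (rule symmetric_matrix_inner[OF sym])
  also have "\<dots> = \<mu> k * (u k \<bullet> x)" using ev by simp
  finally have "l = \<mu> k" using k by simp
  thus ?thesis by simp
qed

lemma eigenvalue_le_lambda_max:
  fixes u :: "'n::finite \<Rightarrow> real^'n" and A :: "real^'n^'n"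
  assumes sym: "transpose A = A" and on: "orthonormal u" and ev: "\<And>k. A *v u k = \<mu> k *\<^sub>R u k"
  shows "\<mu> k \<le> lambda_max A"
proof -
  have sub: "{l. is_eigenvalue A l} \<subseteq> range \<mu>" using eigenvalue_in_range[OF sym on ev] by blast
  hence fin: "finite {l. is_eigenvalue A l}" by (rule finite_subset) simp
  have "is_eigenvalue A (\<mu> k)" unfolding is_eigenvalue_def using orthonormal_nonzero[OF on, of k] ev by blast
  thus ?thesis unfolding lambda_max_def using fin by (intro Max_ge) auto
qed

section \<open>The graph Laplacian\<close>

lemma transpose_diagm: "transpose (diagm d) = diagm d"
  unfolding diagm_def transpose_def by (simp add: vec_eq_iff)

lemma transpose_laplacian: "transpose (laplacian src tgt w) = laplacian src tgt w"
  unfolding laplacian_def by (simp add: matrix_transpose_mul transpose_diagm matrix_mul_assoc)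

lemma laplacian_entry:
  "laplacian src tgt w $ r $ c = (\<Sum>e\<in>UNIV. incidence src tgt $ r $ e * w e * incidence src tgt $ c $ e)"
  unfolding laplacian_def matrix_matrix_mult_def diagm_def transpose_def
  by (simp add: if_distrib sum.delta cong: if_cong)

lemma incidence_column_sum:
  assumes "src e \<noteq> tgt e"
  shows "(\<Sum>r\<in>UNIV. incidence src tgt $ r $ e * x r) = x (src e) - x (tgt e)"
proof -
  have "(\<Sum>r\<in>UNIV. incidence src tgt $ r $ e * x r)
      = (\<Sum>r\<in>UNIV. (if r = src e then x r else 0) + (if r = tgt e then - x r else 0))"
    unfolding incidence_def using assms by (intro sum.cong) auto
  also have "\<dots> = (\<Sum>r\<in>UNIV. (if r = src e then x r else 0)) + (\<Sum>r\<in>UNIV. (if r = tgt e then - x r else 0))"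
    by (simp only: sum.distrib)
  also have "\<dots> = x (src e) - x (tgt e)" by simp
  finally show ?thesis .
qed

lemma incidence_column_sum_zero:
  assumes "src e \<noteq> tgt e"
  shows "(\<Sum>r\<in>UNIV. incidence src tgt $ r $ e) = 0"
  using incidence_column_sum[of src e tgt "\<lambda>_. 1"] assms by simp

lemma laplacian_quadratic_form:
  fixes x :: "real^'n::finite"
  assumes g: "wgraph src tgt w"
  shows "x \<bullet> (laplacian src tgt w *v x) = (\<Sum>e\<in>UNIV. w e * (x $ src e - x $ tgt e)^2)"
proof -
  have ne: "\<And>e. src e \<noteq> tgt e" using g by (simp add: wgraph_def)
  have "x \<bullet> (laplacian src tgt w *v x)
      = (\<Sum>r\<in>UNIV. x $ r * (\<Sum>c\<in>UNIV. (\<Sum>e\<in>UNIV. incidence src tgt $ r $ e * w e * incidence src tgt $ c $ e) * x $ c))"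
    by (simp add: inner_vec_def matrix_vector_mult_def laplacian_entry)
  also have "\<dots> = (\<Sum>e\<in>UNIV. w e * (\<Sum>r\<in>UNIV. incidence src tgt $ r $ e * x $ r) * (\<Sum>c\<in>UNIV. incidence src tgt $ c $ e * x $ c))"
    by (simp add: sum_distrib_left sum_distrib_right mult_ac) (subst sum.swap, rule sum.cong, simp, subst sum.swap, simp)
  also have "\<dots> = (\<Sum>e\<in>UNIV. w e * (x $ src e - x $ tgt e)^2)"
    by (simp add: incidence_column_sum ne power2_eq_square mult.assoc)
  finally show ?thesis .
qed

lemma laplacian_ones:
  assumes g: "wgraph src tgt w"
  shows "laplacian src tgt w *v (\<chi> i. 1) = 0"
proof -
  have ne: "\<And>e. src e \<noteq> tgt e" using g by (simp add: wgraph_def)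
  have "(\<Sum>c\<in>UNIV. (\<Sum>e\<in>UNIV. incidence src tgt $ r $ e * w e * incidence src tgt $ c $ e)) = 0" for r
  proof -
    have "(\<Sum>c\<in>UNIV. (\<Sum>e\<in>UNIV. incidence src tgt $ r $ e * w e * incidence src tgt $ c $ e))
        = (\<Sum>e\<in>UNIV. incidence src tgt $ r $ e * w e * (\<Sum>c\<in>UNIV. incidence src tgt $ c $ e * (\<lambda>_. 1) c))"
      by (subst sum.swap) (simp add: sum_distrib_left)
    also have "\<dots> = 0" by (simp add: incidence_column_sum_zero ne)
    finally show ?thesis .
  qed
  thus ?thesis by (simp add: vec_eq_iff matrix_vector_mult_def laplacian_entry)
qed

lemma laplacian_kernel_constant:
  fixes x :: "real^'n::finite"
  assumes g: "wgraph src tgt w" and c: "connected_graph src tgt" and k: "laplacian src tgt w *v x = 0"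
  shows "x $ i = x $ j"
proof -
  have wp: "\<And>e. w e > 0" using g by (simp add: wgraph_def)
  have "(\<Sum>e\<in>UNIV. w e * (x $ src e - x $ tgt e)^2) = 0"
    using laplacian_quadratic_form[OF g, of x] k by simp
  hence "\<forall>e\<in>UNIV. w e * (x $ src e - x $ tgt e)^2 = 0"
    by (subst sum_nonneg_eq_0_iff[symmetric]) (auto intro: mult_nonneg_nonneg less_imp_le[OF wp])
  hence eq: "\<And>e. x $ src e = x $ tgt e" using wp by (metis UNIV_I mult_eq_0_iff power_eq_0_iff order_less_irrefl right_minus_eq)
  have adj: "\<And>a b. adjacent src tgt a b \<Longrightarrow> x $ a = x $ b"
  proof -
    fix a b assume "adjacent src tgt a b"
    then obtain e where "{src e, tgt e} = {a, b}" unfolding adjacent_def by blast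
    hence "(src e = a \<and> tgt e = b) \<or> (src e = b \<and> tgt e = a)" by (auto simp: doubleton_eq_iff)
    thus "x $ a = x $ b" using eq[of e] by auto
  qed
  have "(adjacent src tgt)\<^sup>*\<^sup>* i j" using c by (simp add: connected_graph_def)
  thus ?thesis
  proof (induction rule: rtranclp_induct)
    case base show ?case by simp
  next
    case (step y z) thus ?case using adj by simp
  qed
qed

lemma laplacian_eigenvalue_nonneg:
  fixes u :: "'n::finite \<Rightarrow> real^'n"
  assumes g: "wgraph src tgt w" and on: "orthonormal u"
    and ev: "laplacian src tgt w *v u k = \<mu> k *\<^sub>R u k"
  shows "\<mu> k \<ge> 0"
proof -
  have wp: "\<And>e. w e > 0" using g by (simp add: wgraph_def)
  have "\<mu> k = (\<Sum>e\<in>UNIV. w e * (u k $ src e - u k $ tgt e)^2)"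
    using eigenvalue_inner[where A="laplacian src tgt w" and u=u and \<mu>=\<mu> and k=k, OF on ev] laplacian_quadratic_form[OF g] by simp
  also have "\<dots> \<ge> 0" by (intro sum_nonneg mult_nonneg_nonneg) (auto intro: less_imp_le[OF wp])
  finally show ?thesis .
qed

lemma laplacian_eigenvalue_range:
  fixes u :: "'n::finite \<Rightarrow> real^'n"
  assumes g: "wgraph src tgt w" and on: "orthonormal u"
    and ev: "\<And>k. laplacian src tgt w *v u k = \<mu> k *\<^sub>R u k"
    and t: "\<tau> \<ge> 0" and tl: "\<tau> * lambda_max (laplacian src tgt w) < pi / 2"
  shows "0 \<le> \<mu> k \<and> \<tau> * \<mu> k < pi / 2"
proof -
  have m0: "\<mu> k \<ge> 0" by (rule laplacian_eigenvalue_nonneg[OF g on ev])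
  have "\<mu> k \<le> lambda_max (laplacian src tgt w)" by (rule eigenvalue_le_lambda_max[OF transpose_laplacian on ev])
  hence "\<tau> * \<mu> k \<le> \<tau> * lambda_max (laplacian src tgt w)" using t by (rule mult_left_mono)
  thus ?thesis using tl m0 by simp
qed

lemma centering_apply:
  "(centering *v x) $ r = x $ r - (\<Sum>c\<in>UNIV. x $ c) / real CARD('n::finite)"
  for x :: "real^'n"
proof -
  have "(centering *v x) $ r = (\<Sum>c\<in>UNIV. (if r = c then x $ c else 0) - x $ c / real CARD('n))"
    unfolding centering_def matrix_vector_mult_def by (simp, rule sum.cong) (auto simp: algebra_simps)
  also have "\<dots> = x $ r - (\<Sum>c\<in>UNIV. x $ c) / real CARD('n)"
    by (simp add: sum_subtractf sum_divide_distrib)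
  finally show ?thesis .
qed

lemma centering_spectral:
  fixes u :: "'n::finite \<Rightarrow> real^'n"
  assumes g: "wgraph src tgt w" and c: "connected_graph src tgt" and on: "orthonormal u"
    and ev: "\<And>k. laplacian src tgt w *v u k = \<mu> k *\<^sub>R u k"
  shows "centering = spectral_matrix u (\<lambda>k. if \<mu> k = 0 then 0 else 1)"
proof (rule spectral_matrix_eq[OF on])
  fix k
  show "centering *v u k = (if \<mu> k = 0 then 0 else 1) *\<^sub>R u k"
  proof (cases "\<mu> k = 0")
    case True
    hence "laplacian src tgt w *v u k = 0" using ev by simp
    hence const: "\<And>i j. u k $ i = u k $ j" using laplacian_kernel_constant[OF g c] by blast
    have "\<And>r. (centering *v u k) $ r = 0"
    proof -
      fix r
      have "(\<Sum>c\<in>UNIV. u k $ c) = (\<Sum>c\<in>(UNIV::'n set). u k $ r)" by (rule sum.cong) (use const in auto)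
      hence "(\<Sum>c\<in>UNIV. u k $ c) = real CARD('n) * u k $ r" by simp
      thus "(centering *v u k) $ r = 0" by (simp add: centering_apply)
    qed
    thus ?thesis using True by (simp add: vec_eq_iff)
  next
    case False
    have "(\<chi> i. 1) \<bullet> (laplacian src tgt w *v u k) = (laplacian src tgt w *v (\<chi> i. 1)) \<bullet> u k"
      by (rule symmetric_matrix_inner[OF transpose_laplacian])
    also have "\<dots> = 0" by (simp add: laplacian_ones[OF g])
    finally have "\<mu> k * ((\<chi> i. 1) \<bullet> u k) = 0" using ev[of k] by simp
    hence "(\<chi> i. 1) \<bullet> u k = 0" using False by simp
    hence s0: "(\<Sum>c\<in>UNIV. u k $ c) = 0" by (simp add: inner_vec_def)
    show ?thesis using False by (simp add: vec_eq_iff centering_apply s0)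
  qed
qed

lemma eff_res_spectral_matrix:
  fixes u :: "'n::finite \<Rightarrow> real^'n" and g :: "'n \<Rightarrow> real"
  assumes on: "orthonormal u"
  shows "eff_res (spectral_matrix u g) i j = (\<Sum>k\<in>UNIV. inverse (g k) * (u k $ i - u k $ j)^2)"
  unfolding eff_res_def pinv_spectral_matrix[OF on]
  by (simp add: spectral_matrix_def sum_subtractf[symmetric] sum.distrib[symmetric] sum_distrib_left power2_eq_square algebra_simps)

definition mode_centrality :: "real \<Rightarrow> real \<Rightarrow> real" where
  "mode_centrality \<tau> \<mu> = (if \<mu> = 0 then 0 else cos (\<tau> * \<mu>) / (\<mu> * (1 - sin (\<tau> * \<mu>))))"

lemma eff_res_centrality_matrix:
  fixes u :: "'n::finite \<Rightarrow> real^'n"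
  assumes g: "wgraph src tgt w" and c: "connected_graph src tgt" and on: "orthonormal u"
    and ev: "\<And>k. laplacian src tgt w *v u k = \<mu> k *\<^sub>R u k"
    and t: "\<tau> \<ge> 0" and tl: "\<tau> * lambda_max (laplacian src tgt w) < pi / 2"
  shows "eff_res (laplacian src tgt w ** matrix_inv (mat_cos (\<tau> *\<^sub>R laplacian src tgt w))
                 ** (centering - mat_sin (\<tau> *\<^sub>R laplacian src tgt w))) i j
       = (\<Sum>k\<in>UNIV. mode_centrality \<tau> (\<mu> k)
                     * (u k $ i - u k $ j)^2)"
proof -
  have L: "laplacian src tgt w = spectral_matrix u \<mu>" by (rule spectral_matrix_eq[OF on ev])
  have range: "\<And>k. 0 \<le> \<tau> * \<mu> k \<and> \<tau> * \<mu> k < pi / 2"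
    using laplacian_eigenvalue_range[OF g on ev t tl] t by simp
  have cpos: "\<And>k. cos (\<tau> * \<mu> k) > 0" using range cos_pos_sin_lt_one(1) by blast
  have cosL: "mat_cos (\<tau> *\<^sub>R laplacian src tgt w) = spectral_matrix u (\<lambda>k. cos (\<tau> * \<mu> k))"
    unfolding L spectral_matrix_scaleR by (rule mat_cos_spectral_matrix[OF on])
  have sinL: "mat_sin (\<tau> *\<^sub>R laplacian src tgt w) = spectral_matrix u (\<lambda>k. sin (\<tau> * \<mu> k))"
    unfolding L spectral_matrix_scaleR by (rule mat_sin_spectral_matrix[OF on])
  have invL: "matrix_inv (mat_cos (\<tau> *\<^sub>R laplacian src tgt w)) = spectral_matrix u (\<lambda>k. inverse (cos (\<tau> * \<mu> k)))"
    unfolding cosL by (rule matrix_inv_spectral_matrix[OF on]) (use cpos in \<open>auto simp: less_imp_neq[symmetric]\<close>)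
  have X: "laplacian src tgt w ** matrix_inv (mat_cos (\<tau> *\<^sub>R laplacian src tgt w))
                 ** (centering - mat_sin (\<tau> *\<^sub>R laplacian src tgt w))
      = spectral_matrix u (\<lambda>k. \<mu> k * inverse (cos (\<tau> * \<mu> k)) * ((if \<mu> k = 0 then 0 else 1) - sin (\<tau> * \<mu> k)))"
    unfolding invL sinL centering_spectral[OF g c on ev] spectral_matrix_diff
    by (subst L) (simp add: spectral_matrix_mult[OF on])
  have iv: "\<And>k. inverse (\<mu> k * inverse (cos (\<tau> * \<mu> k)) * ((if \<mu> k = 0 then 0 else 1) - sin (\<tau> * \<mu> k)))
      = mode_centrality \<tau> (\<mu> k)"
    by (simp add: mode_centrality_def field_simps)
  show ?thesis unfolding X eff_res_spectral_matrix[OF on] iv ..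
qed

section \<open>The performance measure\<close>

lemma shifted_laplacian_spectral:
  fixes u :: "'n::finite \<Rightarrow> real^'n" and L :: "real^'n^'n"
  assumes on: "orthonormal u" and L: "L = spectral_matrix u \<mu>"
  shows "(\<chi> i j. (if i = j then s else 0) + c * complex_of_real (L $ i $ j))
       = spectral_matrix u (\<lambda>k. s + c * complex_of_real (\<mu> k))"
proof -
  have "(\<Sum>k\<in>UNIV. (s + c * complex_of_real (\<mu> k)) * of_real (u k $ i * u k $ j))
      = s * of_real (\<Sum>k\<in>UNIV. u k $ i * u k $ j) + c * of_real (\<Sum>k\<in>UNIV. \<mu> k * (u k $ i * u k $ j))" for i j
    by (simp add: algebra_simps sum.distrib sum_distrib_left of_real_sum)
  thus ?thesis unfolding L spectral_matrix_def by (simp add: vec_eq_iff orthonormal_complete[OF on])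
qed

lemma transfer_tail_entry:
  fixes P :: "complex^'n::finite^'n" and E :: "real^'e::finite^'n"
  shows "(P ** cmat (- E) ** cmat (diagm (\<chi> e. sqrt (v e)))) $ r $ f
       = - (of_real (sqrt (v f)) * (\<Sum>i\<in>UNIV. P $ r $ i * of_real (E $ i $ f)))"
  unfolding cmat_def diagm_def matrix_matrix_mult_def
  by (simp add: if_distrib sum.delta cong: if_cong) (simp add: sum_negf sum_distrib_left mult_ac)

lemma spectral_matrix_incidence_entry:
  fixes u :: "'n::finite \<Rightarrow> real^'n" and \<gamma> :: "'n \<Rightarrow> complex"
  assumes ne: "src f \<noteq> tgt f"
  shows "(\<Sum>i\<in>UNIV. spectral_matrix u \<gamma> $ r $ i * of_real (incidence src tgt $ i $ f))
       = (\<Sum>k\<in>UNIV. \<gamma> k * of_real (u k $ src f - u k $ tgt f) * of_real (u k $ r))"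
proof -
  have "(\<Sum>i\<in>UNIV. spectral_matrix u \<gamma> $ r $ i * of_real (incidence src tgt $ i $ f))
      = (\<Sum>k\<in>UNIV. \<gamma> k * of_real (u k $ r) * of_real (\<Sum>i\<in>UNIV. incidence src tgt $ i $ f * u k $ i))"
    unfolding spectral_matrix_def
    by (simp add: sum_distrib_right sum_distrib_left of_real_sum mult_ac) (rule sum.swap)
  also have "\<dots> = (\<Sum>k\<in>UNIV. \<gamma> k * of_real (u k $ src f - u k $ tgt f) * of_real (u k $ r))"
    using incidence_column_sum[of src f tgt "\<lambda>i. u _ $ i"] ne by (simp add: mult_ac)
  finally show ?thesis .
qed

lemma orthonormal_norm_sum:
  fixes u :: "'n::finite \<Rightarrow> real^'n" and a :: "'n \<Rightarrow> complex"
  assumes on: "orthonormal u"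
  shows "(\<Sum>r\<in>UNIV. cnj (\<Sum>k\<in>UNIV. a k * of_real (u k $ r)) * (\<Sum>k\<in>UNIV. a k * of_real (u k $ r)))
       = of_real (\<Sum>k\<in>UNIV. (cmod (a k))^2)"
proof -
  have "(\<Sum>r\<in>UNIV. cnj (\<Sum>k\<in>UNIV. a k * of_real (u k $ r)) * (\<Sum>k\<in>UNIV. a k * of_real (u k $ r)))
      = (\<Sum>r\<in>UNIV. \<Sum>k\<in>UNIV. \<Sum>l\<in>UNIV. (a k * cnj (a l)) * of_real (u k $ r * u l $ r))"
    by (simp add: sum_product mult_ac)
  also have "\<dots> = (\<Sum>k\<in>UNIV. \<Sum>l\<in>UNIV. (a k * cnj (a l)) * of_real (\<Sum>r\<in>UNIV. u k $ r * u l $ r))"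
    by (subst sum.swap, rule sum.cong, simp, subst sum.swap) (simp add: of_real_sum sum_distrib_left)
  also have "\<dots> = (\<Sum>k\<in>UNIV. a k * cnj (a k))"
    by (simp add: orthonormal_inner[OF on] if_distrib sum.delta cong: if_cong)
  also have "\<dots> = of_real (\<Sum>k\<in>UNIV. (cmod (a k))^2)"
    by (simp only: of_real_sum complex_norm_square)
  finally show ?thesis .
qed

lemma trace_cadj_mult:
  fixes G :: "complex^'e::finite^'n::finite"
  shows "trace (cadj G ** G) = (\<Sum>f\<in>UNIV. \<Sum>r\<in>UNIV. cnj (G $ r $ f) * G $ r $ f)"
  unfolding trace_def cadj_def matrix_matrix_mult_def by simp

lemma transfer_trace_formula:
  fixes u :: "'n::finite \<Rightarrow> real^'n" and src tgt :: "'e::finite \<Rightarrow> 'n"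
  assumes g: "wgraph src tgt w" and c: "connected_graph src tgt" and on: "orthonormal u"
    and ev: "\<And>k. laplacian src tgt w *v u k = \<mu> k *\<^sub>R u k"
    and s0: "s \<noteq> 0" and nz: "\<And>k. \<mu> k \<noteq> 0 \<Longrightarrow> delay_char (\<mu> k) \<tau> s \<noteq> 0"
  shows "Re (trace (cadj (transfer src tgt w \<tau> v s) ** transfer src tgt w \<tau> v s))
    = (\<Sum>f\<in>UNIV. \<Sum>k\<in>UNIV. (sqrt (v f) * (u k $ src f - u k $ tgt f))^2
          * (if \<mu> k = 0 then 0 else 1 / (cmod (delay_char (\<mu> k) \<tau> s))^2))"
proof -
  have ne: "\<And>f. src f \<noteq> tgt f" using g by (simp add: wgraph_def)
  have L: "laplacian src tgt w = spectral_matrix u \<mu>" by (rule spectral_matrix_eq[OF on ev])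
  define e where "e = exp (- (complex_of_real \<tau> * s))"
  have aae: "\<And>k. delay_char (\<mu> k) \<tau> s = s + e * complex_of_real (\<mu> k)"
    unfolding delay_char_def e_def by (simp add: mult.commute)
  have M: "(\<chi> i j. (if i = j then s else 0) + e * complex_of_real (laplacian src tgt w $ i $ j))
       = spectral_matrix u (\<lambda>k. s + e * complex_of_real (\<mu> k))" by (rule shifted_laplacian_spectral[OF on L])
  have nz': "\<And>k. s + e * complex_of_real (\<mu> k) \<noteq> 0"
    using nz s0 aae by (case_tac "\<mu> k = 0") auto
  define \<gamma> where "\<gamma> = (\<lambda>k. complex_of_real (if \<mu> k = 0 then 0 else 1) * inverse (s + e * complex_of_real (\<mu> k)))"
  have P: "cmat centering ** matrix_inv (\<chi> i j. (if i = j then s else 0) + e * complex_of_real (laplacian src tgt w $ i $ j))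
      = spectral_matrix u \<gamma>"
    unfolding M centering_spectral[OF g c on ev] cmat_spectral_matrix matrix_inv_spectral_matrix[OF on nz'] spectral_matrix_mult[OF on] \<gamma>_def by simp
  define a where "a = (\<lambda>f k. - (complex_of_real (sqrt (v f)) * \<gamma> k * of_real (u k $ src f - u k $ tgt f)))"
  have G: "transfer src tgt w \<tau> v s $ r $ f = (\<Sum>k\<in>UNIV. a f k * of_real (u k $ r))" for r f
  proof -
    have "transfer src tgt w \<tau> v s $ r $ f
        = - (of_real (sqrt (v f)) * (\<Sum>i\<in>UNIV. spectral_matrix u \<gamma> $ r $ i * of_real (incidence src tgt $ i $ f)))"
      unfolding transfer_def e_def[symmetric] P by (rule transfer_tail_entry)
    also have "\<dots> = (\<Sum>k\<in>UNIV. a f k * of_real (u k $ r))"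
      unfolding spectral_matrix_incidence_entry[of src f tgt, OF ne[of f]] a_def by (simp add: sum_distrib_left sum_negf mult_ac)
    finally show ?thesis .
  qed
  have "trace (cadj (transfer src tgt w \<tau> v s) ** transfer src tgt w \<tau> v s)
      = (\<Sum>f\<in>UNIV. of_real (\<Sum>k\<in>UNIV. (cmod (a f k))^2))"
    unfolding trace_cadj_mult G orthonormal_norm_sum[OF on] ..
  hence "Re (trace (cadj (transfer src tgt w \<tau> v s) ** transfer src tgt w \<tau> v s))
      = (\<Sum>f\<in>UNIV. \<Sum>k\<in>UNIV. (cmod (a f k))^2)" by (simp add: Re_sum)
  also have "\<dots> = (\<Sum>f\<in>UNIV. \<Sum>k\<in>UNIV. (sqrt (v f) * (u k $ src f - u k $ tgt f))^2
          * (if \<mu> k = 0 then 0 else 1 / (cmod (delay_char (\<mu> k) \<tau> s))^2))"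
  proof (intro sum.cong refl)
    fix f k
    have "(cmod (a f k))^2 = (sqrt (v f) * (u k $ src f - u k $ tgt f))^2 * (cmod (\<gamma> k))^2"
      unfolding a_def by (simp add: norm_mult power_mult_distrib norm_of_real del: of_real_diff)
    also have "(cmod (\<gamma> k))^2 = (if \<mu> k = 0 then 0 else 1 / (cmod (delay_char (\<mu> k) \<tau> s))^2)"
      unfolding \<gamma>_def aae by (simp add: norm_inverse power_inverse divide_inverse)
    finally show "(cmod (a f k))^2 = (sqrt (v f) * (u k $ src f - u k $ tgt f))^2
          * (if \<mu> k = 0 then 0 else 1 / (cmod (delay_char (\<mu> k) \<tau> s))^2)" .
  qed
  finally show ?thesis .
qed

lemma mode_gain_integral:
  assumes "0 \<le> \<mu>" "0 \<le> \<tau>" "\<tau> * \<mu> < pi / 2"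
  shows "((\<lambda>\<omega>. if \<mu> = 0 then 0 else 1 / (cmod (delay_char \<mu> \<tau> (\<i> * of_real \<omega>)))^2)
           has_integral pi * mode_centrality \<tau> \<mu>) UNIV"
proof (cases "\<mu> = 0")
  case False
  hence "0 < \<mu>" using assms(1) by simp
  from delay_gain_integral[OF this assms(2,3)] False show ?thesis
    by (simp add: mode_centrality_def)
qed (simp add: mode_centrality_def)

lemma rho_ss_linear:
  fixes u :: "'n::finite \<Rightarrow> real^'n" and src tgt :: "'e::finite \<Rightarrow> 'n"
  assumes g: "wgraph src tgt w" and c: "connected_graph src tgt" and on: "orthonormal u"
    and ev: "\<And>k. laplacian src tgt w *v u k = \<mu> k *\<^sub>R u k"
    and t: "\<tau> \<ge> 0" and tl: "\<tau> * lambda_max (laplacian src tgt w) < pi / 2"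
    and vp: "\<And>f. v f \<ge> 0"
  shows "rho_ss src tgt w \<tau> v = (\<Sum>f\<in>UNIV. v f * ((1/2) * (\<Sum>k\<in>UNIV.
            mode_centrality \<tau> (\<mu> k) * (u k $ src f - u k $ tgt f)^2)))"
proof -
  define \<psi> where "\<psi> k \<omega> = (if \<mu> k = 0 then 0 else 1 / (cmod (delay_char (\<mu> k) \<tau> (\<i> * of_real \<omega>)))^2)"
    for k and \<omega> :: real
  define cf where "cf f k = (sqrt (v f) * (u k $ src f - u k $ tgt f))^2" for f k
  have rng: "\<And>k. 0 \<le> \<mu> k \<and> \<tau> * \<mu> k < pi / 2" by (rule laplacian_eigenvalue_range[OF g on ev t tl])
  have sum_int: "((\<lambda>\<omega>. \<Sum>f\<in>UNIV. \<Sum>k\<in>UNIV. cf f k * \<psi> k \<omega>) has_integral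
        (\<Sum>f\<in>UNIV. \<Sum>k\<in>UNIV. cf f k * (pi * mode_centrality \<tau> (\<mu> k)))) UNIV"
    unfolding \<psi>_def using rng t by (intro has_integral_sum has_integral_mult_right mode_gain_integral) auto
  have integrand: "Re (trace (cadj (transfer src tgt w \<tau> v (\<i> * of_real \<omega>)) ** transfer src tgt w \<tau> v (\<i> * of_real \<omega>)))
      = (\<Sum>f\<in>UNIV. \<Sum>k\<in>UNIV. cf f k * \<psi> k \<omega>)" if "\<omega> \<in> UNIV - {0}" for \<omega>
    unfolding cf_def \<psi>_def
  proof (rule transfer_trace_formula[OF g c on ev])
    show "\<i> * complex_of_real \<omega> \<noteq> 0" using that by simp
    fix k assume "\<mu> k \<noteq> 0"
    thus "delay_char (\<mu> k) \<tau> (\<i> * complex_of_real \<omega>) \<noteq> 0"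
      using rng[of k] t by (intro delay_char_imag_nonzero) auto
  qed
  have "((\<lambda>\<omega>. Re (trace (cadj (transfer src tgt w \<tau> v (\<i> * of_real \<omega>))
        ** transfer src tgt w \<tau> v (\<i> * of_real \<omega>))))
      has_integral (\<Sum>f\<in>UNIV. \<Sum>k\<in>UNIV. cf f k * (pi * mode_centrality \<tau> (\<mu> k)))) UNIV"
    \<comment> \<open>At \<omega> = 0 the resolvent is singular and matrix_inv returns junk; one point is negligible.\<close>
    by (rule has_integral_spike[OF negligible_sing integrand sum_int])
  hence "rho_ss src tgt w \<tau> v = 1 / (2 * pi) * (\<Sum>f\<in>UNIV. \<Sum>k\<in>UNIV. cf f k * (pi * mode_centrality \<tau> (\<mu> k)))"
    unfolding rho_ss_def by (simp add: integral_unique)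
  also have "\<dots> = (\<Sum>f\<in>UNIV. v f * ((1/2) * (\<Sum>k\<in>UNIV. mode_centrality \<tau> (\<mu> k) * (u k $ src f - u k $ tgt f)^2)))"
  proof -
    have "cf f k = v f * (u k $ src f - u k $ tgt f)^2" for f k
      using vp by (simp add: cf_def power_mult_distrib)
    thus ?thesis by (simp add: sum_distrib_left field_simps)
  qed
  finally show ?thesis .
qed

lemma rho_ss_eq_centrality_sum:
  fixes src tgt :: "'e::finite \<Rightarrow> 'n::finite"
  assumes g: "wgraph src tgt w" and c: "connected_graph src tgt"
    and t: "\<tau> \<ge> 0" and tl: "\<tau> * lambda_max (laplacian src tgt w) < pi / 2"
    and v: "\<And>f. v f \<ge> 0"
  shows "rho_ss src tgt w \<tau> v = (\<Sum>f\<in>UNIV. v f * ((1 / 2) * eff_res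
           (laplacian src tgt w ** matrix_inv (mat_cos (\<tau> *\<^sub>R laplacian src tgt w))
              ** (centering - mat_sin (\<tau> *\<^sub>R laplacian src tgt w)))
           (src f) (tgt f)))"
proof -
  obtain u :: "'n \<Rightarrow> real^'n" and \<mu> where on: "orthonormal u"
    and ev: "\<And>i. laplacian src tgt w *v u i = \<mu> i *\<^sub>R u i"
    using symmetric_orthonormal_eigenbasis[OF transpose_laplacian] by blast
  show ?thesis
    unfolding rho_ss_linear[OF g c on ev t tl v] eff_res_centrality_matrix[OF g c on ev t tl] ..
qed

theorem theorem10:
  fixes src tgt :: "'e::finite \<Rightarrow> 'n::finite"
    and w :: "'e \<Rightarrow> real" and \<tau> :: real and v :: "'e \<Rightarrow> real" and e :: 'e
  assumes "wgraph src tgt w"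
    and "connected_graph src tgt"
    and "\<tau> \<ge> 0"
    and "\<tau> * lambda_max (laplacian src tgt w) < pi / 2"
    and "\<forall>f. v f > 0"
  shows "((\<lambda>s. rho_ss src tgt w \<tau> (v(e := s))) has_real_derivative
            (1 / 2) * eff_res
               (laplacian src tgt w ** matrix_inv (mat_cos (\<tau> *\<^sub>R laplacian src tgt w))
                 ** (centering - mat_sin (\<tau> *\<^sub>R laplacian src tgt w)))
               (src e) (tgt e))
         (at (v e))"
proof -
  define \<nu> where "\<nu> f = (1 / 2) * eff_res
      (laplacian src tgt w ** matrix_inv (mat_cos (\<tau> *\<^sub>R laplacian src tgt w))
        ** (centering - mat_sin (\<tau> *\<^sub>R laplacian src tgt w))) (src f) (tgt f)" for f
  define K where "K = (\<Sum>f\<in>UNIV. v f * \<nu> f)"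
  have affine: "rho_ss src tgt w \<tau> (v(e := s)) = K + (s - v e) * \<nu> e" if "s \<in> {0<..}" for s
  proof -
    have "\<And>f. (v(e := s)) f \<ge> 0" using that assms(5) by (auto intro: less_imp_le)
    hence "rho_ss src tgt w \<tau> (v(e := s)) = (\<Sum>f\<in>UNIV. (v(e := s)) f * \<nu> f)"
      unfolding \<nu>_def by (rule rho_ss_eq_centrality_sum[OF assms(1-4)])
    also have "\<dots> = (\<Sum>f\<in>UNIV. v f * \<nu> f + (if f = e then (s - v e) * \<nu> e else 0))"
      by (intro sum.cong) (auto simp: algebra_simps)
    finally show ?thesis by (simp add: sum.distrib K_def)
  qed
  have "((\<lambda>s. K + (s - v e) * \<nu> e) has_real_derivative \<nu> e) (at (v e))"
    by (auto intro!: derivative_eq_intros)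
  hence "((\<lambda>s. rho_ss src tgt w \<tau> (v(e := s))) has_real_derivative \<nu> e) (at (v e))"
    by (rule has_field_derivative_transform_within_open[OF _ open_greaterThan])
       (use assms(5) affine in auto)
  thus ?thesis unfolding \<nu>_def .
qed

end
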